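(* Let $p,q,r\in(0,1)$ with $p+q+r=1$. Let $X_1,\eta_2,\eta_3,\ldots$ be independent random variables, each taking the values $1,-1,0$ with probabilities $p,q,r$ respectively, and let $K_3,K_4,\ldots$ be independent random variables, independent of the previous ones, with $K_{n+1}$ uniformly distributed on $\{1,n\}$. Set $X_2=\eta_2X_1$, $X_{n+1}=\eta_{n+1}X_{K_{n+1}}$ for $n\ge2$, and $S_n=\sum_{k=1}^nX_k$. Let $T_n$ denote the partial sums of the same construction with $X_1$ replaced by the constant $1$, and let $\sigma_T^2=\lim_{n\to\infty}\operatorname{Var}(T_n)/n$ (this limit exists). Then, as $n\to\infty$, $\dfrac{S_n-n\frac{(p-q)X_1}{2+q-p}}{\sqrt n}$ converges in distribution to the mixture $(p+q)\mathcal N_{0,\sigma_T^2}+r\delta_0$, i.e. to the law with distribution function $F(x)=(p+q)G(x)+r\,\mathbf 1\{x\ge0\}$, where $G$ is the distribution function of the normal law with mean $0$ and variance $\sigma_T^2$.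
   Context: This is the elephant random walk with delays in which the elephant remembers only the first step and the most recent step: step $n+1$ ($n\ge2$) picks one of $X_1,X_n$ uniformly at random and repeats it (probability $p$), reverses it (probability $q$), or is $0$ (probability $r$). *)

theory Defs
  imports "HOL-Probability.Probability"
begin

text \<open>Elephant random walk with delays, remembering only the first and the most
recent step.  eX X1 eta K n w is the n-th step X_n (n >= 1): X_1 = X1,
X_2 = eta_2 X_1, and X_n = eta_n X_{K_n} for n >= 3 (K_n takes values in {1, n-1}).
On the null event where K_n is not an admissible earlier index the step is set to 0;
X_0 = 0 is unused.\<close>

function eX :: "('a \<Rightarrow> real) \<Rightarrow> (nat \<Rightarrow> 'a \<Rightarrow> real) \<Rightarrow> (nat \<Rightarrow> 'a \<Rightarrow> nat) \<Rightarrow> nat \<Rightarrow> 'a \<Rightarrow> real"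
where
  "eX X1 eta K n w =
     (if n = 1 then X1 w
      else if n = 2 then eta 2 w * X1 w
      else if 3 \<le> n then
        (if 1 \<le> K n w \<and> K n w < n then eta n w * eX X1 eta K (K n w) w else 0)
      else 0)"
  by pat_completeness auto
termination
  by (relation "Wellfounded.measure (\<lambda>(_, _, _, n, _). n)") auto

definition eS :: "('a \<Rightarrow> real) \<Rightarrow> (nat \<Rightarrow> 'a \<Rightarrow> real) \<Rightarrow> (nat \<Rightarrow> 'a \<Rightarrow> nat) \<Rightarrow> nat \<Rightarrow> 'a \<Rightarrow> real"
  where "eS X1 eta K n w = (\<Sum>k=1..n. eX X1 eta K k w)"

definition normal_cdf_var :: "real \<Rightarrow> real \<Rightarrow> real"
  where "normal_cdf_var s x =
    (if s = 0 then (if 0 \<le> x then 1 else 0)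
     else cdf (density lborel (normal_density 0 (sqrt s))) x)"

end

theory Submission
  imports Defs "HOL-Real_Asymp.Real_Asymp"
begin

text \<open>Every step of the walk is a product of \<open>\<eta>\<close>'s with \<open>X\<^sub>1\<close>, so \<open>S\<^sub>n = X\<^sub>1 T\<^sub>n\<close>, where \<open>T\<^sub>n\<close> is the
  walk started from 1, built from \<open>\<eta>\<^sub>2, \<eta>\<^sub>3, \<dots>\<close> and the \<open>K\<^sub>n\<close> and hence independent of \<open>X\<^sub>1\<close>.
  The triple \<open>(X\<^sub>1, T\<^sub>n, Y\<^sub>n)\<close>, \<open>Y\<^sub>n\<close> the last step, is a Markov chain. In the centred coordinate
  \<open>d = T\<^sub>n - n m\<close>, \<open>m = (p - q)/(2 + q - p)\<close>, its one-step operator fixes \<open>d + m Y\<close>, adds exactly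
  \<open>\<sigma>\<^sup>2\<close> to a quadratic potential \<open>d\<^sup>2 + 2 m d Y - 2 c(Y)\<close> and contracts \<open>d (Y - m)\<close>; this gives
  \<open>Var T\<^sub>n = n \<sigma>\<^sup>2 + O(1)\<close>. The same operator multiplies the corrected exponential
  \<open>e\<^sup>i\<^sup>s\<^sup>d (1 + i s m Y + s\<^sup>2 c(Y))\<close> by \<open>1 - \<sigma>\<^sup>2 s\<^sup>2/2\<close> up to \<open>O(\<bar>s\<bar>\<^sup>3)\<close>, so the characteristic
  function of \<open>(T\<^sub>n - n m)/\<surd>n\<close> tends to \<open>exp (-\<sigma>\<^sup>2 \<theta>\<^sup>2/2)\<close> and Levy's continuity theorem gives
  the central limit theorem for \<open>T\<^sub>n\<close>. Splitting according to \<open>X\<^sub>1 \<in> {1, -1, 0}\<close> produces the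
  mixture \<open>(p + q) N(0, \<sigma>\<^sup>2) + r \<delta>\<^sub>0\<close>.\<close>

section \<open>The one-step operator in centred coordinates\<close>

text \<open>For the walk started from \<open>X\<^sub>1 = 1\<close>, with position \<open>T\<^sub>n\<close>, last step \<open>y = Y\<^sub>n\<close> and centred
  position \<open>d = T\<^sub>n - n m\<close>, the next step is \<open>\<eta>\<close> or \<open>\<eta> y\<close> with probability 1/2 each, where
  \<open>\<eta> = 1, -1, 0\<close> with probabilities \<open>p, q, r\<close>. Hence \<open>centred_step p q r m G d y\<close> is the
  conditional expectation of \<open>G (T\<^sub>n\<^sub>+\<^sub>1 - (n + 1) m) Y\<^sub>n\<^sub>+\<^sub>1\<close>.\<close>

definition centred_step ::
    "real \<Rightarrow> real \<Rightarrow> real \<Rightarrow> real \<Rightarrow> (real \<Rightarrow> real \<Rightarrow> 'c::real_vector) \<Rightarrow> real \<Rightarrow> real \<Rightarrow> 'c" where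
  "centred_step p q r m G d y =
     (p/2) *\<^sub>R G (d + 1 - m) 1 + (q/2) *\<^sub>R G (d - 1 - m) (-1) + (r/2) *\<^sub>R G (d - m) 0
     + (p/2) *\<^sub>R G (d + y - m) y + (q/2) *\<^sub>R G (d - y - m) (-y) + (r/2) *\<^sub>R G (d - m) 0"

lemma centred_step_add:
  "centred_step p q r m (\<lambda>d y. G d y + H d y) d y = centred_step p q r m G d y + centred_step p q r m H d y"
  unfolding centred_step_def by (simp add: algebra_simps)

lemma centred_step_diff:
  "centred_step p q r m (\<lambda>d y. G d y - H d y) d y = centred_step p q r m G d y - centred_step p q r m H d y"
  unfolding centred_step_def by (simp add: algebra_simps)

lemma centred_step_of_real_mult:
  "centred_step p q r m (\<lambda>d y. complex_of_real (G d y) * c) d y = complex_of_real (centred_step p q r m G d y) * c"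
  unfolding centred_step_def by (simp add: algebra_simps scaleR_conv_of_real)

lemma centred_step_const:
  assumes "p + q + r = 1"
  shows "centred_step p q r m (\<lambda>d y. c) d y = c"
proof -
  have "centred_step p q r m (\<lambda>d y. c) d y = (p + q + r) *\<^sub>R c"
    unfolding centred_step_def by (simp add: algebra_simps flip: scaleR_add_left)
  then show ?thesis using assms by simp
qed

lemma centred_step_iexp:
  "centred_step p q r m (\<lambda>d y. iexp (s * d) * H y) d y
     = iexp (s * d) * centred_step p q r m (\<lambda>d y. iexp (s * d) * H y) 0 y"
proof -
  have shift: "iexp (s * (d + c)) = iexp (s * d) * iexp (s * c)" for c
    by (simp add: exp_add[symmetric] algebra_simps)
  have "d + 1 - m = d + (1 - m)" "d - 1 - m = d + (-1 - m)" "d - m = d + (-m)"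
    "d + y - m = d + (y - m)" "d - y - m = d + (-y - m)"
    by simp_all
  then show ?thesis
    unfolding centred_step_def by (simp only: shift) (simp add: scaleR_conv_of_real algebra_simps)
qed

lemma norm_centred_step_le:
  assumes "\<And>d' y'. \<bar>y'\<bar> \<le> 1 \<Longrightarrow> \<bar>d'\<bar> \<le> 2 \<Longrightarrow> norm (G d' y') \<le> B"
    and "\<bar>y\<bar> \<le> 1" "\<bar>m\<bar> \<le> 1" "0 \<le> p" "0 \<le> q" "0 \<le> r" "p + q + r = 1"
  shows "norm (centred_step p q r m G 0 y) \<le> B"
proof -
  have G: "norm (G (y' - m) y') \<le> B" if "\<bar>y'\<bar> \<le> 1" for y'
    using that assms(3) by (intro assms(1)) auto
  have "norm (centred_step p q r m G 0 y) \<le> (p/2) * B + (q/2) * B + (r/2) * B + (p/2) * B + (q/2) * B + (r/2) * B"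
    unfolding centred_step_def using assms(2,4-6) G[of 1] G[of "-1"] G[of 0] G[of y] G[of "-y"]
    by (intro norm_triangle_mono) (auto simp: mult.commute[of B] intro: mult_left_mono)
  also have "\<dots> = (p + q + r) * B" by (simp add: algebra_simps)
  also have "\<dots> = B" using assms(7) by simp
  finally show ?thesis .
qed

text \<open>In the coordinates \<open>p = c + a\<close>, \<open>q = c - a\<close>, \<open>r = 1 - 2c\<close> the next three identities hold
  modulo the fixed-point equations \<open>a (1 + m) = m\<close> and \<open>c (1 + b) = b\<close>, which makes them easy
  to check polynomially.\<close>

lemma centred_step_linear:
  assumes "a * (1 + m) = m"
  shows "centred_step (c + a) (c - a) (1 - 2*c) m (\<lambda>d y. d + m * y) d y = d + m * y"
proof -
  have "centred_step (c + a) (c - a) (1 - 2*c) m (\<lambda>d y. d + m * y) d y - (d + m * y)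
      = (1 + y) * (a * (1 + m) - m)"
    unfolding centred_step_def by (simp add: field_simps)
  then show ?thesis using assms by simp
qed

lemma centred_step_cross:
  assumes "a * (1 + m) = m"
  shows "centred_step (c + a) (c - a) (1 - 2*c) m (\<lambda>d y. d * (y - m)) d y
       = a * (d * (y - m)) + centred_step (c + a) (c - a) (1 - 2*c) m (\<lambda>d y. (y - m)^2) 0 y"
proof -
  have "centred_step (c + a) (c - a) (1 - 2*c) m (\<lambda>d y. d * (y - m)) d y
      - (a * (d * (y - m)) + centred_step (c + a) (c - a) (1 - 2*c) m (\<lambda>d y. (y - m)^2) 0 y)
      = d * (a * (1 + m) - m)"
    unfolding centred_step_def by (simp add: field_simps power2_eq_square)
  then show ?thesis using assms by simp
qed

lemma centred_step_quadratic:
  assumes "a * (1 + m) = m" "c * (1 + b) = b"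
  defines "Q \<equiv> \<lambda>d y. d^2 + 2*m*d*y - 2*(m^2*(1 + m)*y - (1/2 + m)*b*y^2)"
  shows "centred_step (c + a) (c - a) (1 - 2*c) m Q d y = Q d y + (1 + 2*m) * (b - m^2)"
proof -
  have "centred_step (c + a) (c - a) (1 - 2*c) m Q d y - (Q d y + (1 + 2*m) * (b - m^2))
      = 2*(1 + y)*(d - m - m^2)*(a*(1 + m) - m) + (1 + y^2)*(1 + 2*m)*(c*(1 + b) - b)"
    unfolding centred_step_def Q_def by (simp add: field_simps power2_eq_square power3_eq_cube)
  then show ?thesis using assms(1,2) by simp
qed

locale erw_params =
  fixes p q r :: real
  assumes p_pos: "0 < p" and q_pos: "0 < q" and r_pos: "0 < r" and pqr_sum: "p + q + r = 1"
begin

text \<open>\<open>mean_Y\<close> and \<open>mean_Y2\<close> are the stationary first and second moments of the step \<open>Y\<^sub>n\<close>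
  of the walk started from 1: they solve \<open>m = (p - q)(1 + m)/2\<close> and \<open>b = (p + q)(1 + b)/2\<close>.\<close>

definition mean_Y :: real where "mean_Y = (p - q) / (2 + q - p)"

definition mean_Y2 :: real where "mean_Y2 = (p + q) / (2 - p - q)"

definition sigma2 :: real where "sigma2 = (1 + 2 * mean_Y) * (mean_Y2 - mean_Y^2)"

definition corr :: "real \<Rightarrow> real" where
  "corr y = mean_Y^2 * (1 + mean_Y) * y - (1/2 + mean_Y) * mean_Y2 * y^2"

definition corr_bound :: real where
  "corr_bound = \<bar>mean_Y^2 * (1 + mean_Y)\<bar> + \<bar>(1/2 + mean_Y) * mean_Y2\<bar>"

definition qpot :: "real \<Rightarrow> real \<Rightarrow> real" where "qpot d y = d^2 + 2 * mean_Y * d * y - 2 * corr y"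

abbreviation cstep :: "(real \<Rightarrow> real \<Rightarrow> 'c::real_vector) \<Rightarrow> real \<Rightarrow> real \<Rightarrow> 'c" where
  "cstep \<equiv> centred_step p q r mean_Y"

lemma p_less_1: "p < 1" and q_less_1: "q < 1"
  using p_pos q_pos r_pos pqr_sum by simp_all

lemma denominators_pos: "0 < 2 + q - p" "0 < 2 - p - q"
  using p_pos q_pos p_less_1 q_less_1 by simp_all

lemma mean_Y_fixed: "(p - q) / 2 * (1 + mean_Y) = mean_Y"
  using denominators_pos unfolding mean_Y_def by (simp add: field_simps)

lemma mean_Y2_fixed: "(p + q) / 2 * (1 + mean_Y2) = mean_Y2"
  using denominators_pos unfolding mean_Y2_def by (simp add: field_simps)

lemma cstep_half_coords:
  "cstep = centred_step ((p + q)/2 + (p - q)/2) ((p + q)/2 - (p - q)/2) (1 - 2 * ((p + q)/2)) mean_Y"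
proof -
  have "(p + q)/2 + (p - q)/2 = p" "(p + q)/2 - (p - q)/2 = q" "1 - 2 * ((p + q)/2) = r"
    using pqr_sum by (simp_all add: field_simps)
  then show ?thesis by (simp only:)
qed

lemma abs_mean_Y_le: "\<bar>mean_Y\<bar> \<le> mean_Y2"
proof -
  have "\<bar>mean_Y\<bar> = \<bar>p - q\<bar> / (2 + q - p)"
    unfolding mean_Y_def using denominators_pos(1) by (simp add: abs_divide)
  also have "\<dots> \<le> (p + q) / (2 - p - q)"
    by (rule frac_le) (use denominators_pos p_pos q_pos in \<open>auto simp: abs_le_iff\<close>)
  finally show ?thesis unfolding mean_Y2_def .
qed

lemma mean_Y2_pos: "0 < mean_Y2"
  using denominators_pos p_pos q_pos unfolding mean_Y2_def by simp

lemma mean_Y2_less_1: "mean_Y2 < 1"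
  using denominators_pos r_pos pqr_sum unfolding mean_Y2_def by simp

lemma abs_mean_Y_less: "\<bar>mean_Y\<bar> < 1"
  using abs_mean_Y_le mean_Y2_less_1 by simp

lemma sigma2_pos: "0 < sigma2"
proof -
  have "1 + 2 * mean_Y > 0"
    using denominators_pos p_pos q_pos unfolding mean_Y_def by (simp add: field_simps)
  moreover have "mean_Y^2 < mean_Y2"
  proof -
    have "mean_Y^2 = \<bar>mean_Y\<bar> * \<bar>mean_Y\<bar>" by (simp add: power2_eq_square)
    also have "\<dots> \<le> \<bar>mean_Y\<bar> * mean_Y2" by (intro mult_left_mono abs_mean_Y_le) simp
    also have "\<dots> < mean_Y2" using abs_mean_Y_less mean_Y2_pos by simp
    finally show ?thesis .
  qed
  ultimately show ?thesis unfolding sigma2_def by simp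
qed

lemma cstep_const: "cstep (\<lambda>d y. c) d y = c"
  by (rule centred_step_const[OF pqr_sum])

lemma cstep_linear: "cstep (\<lambda>d y. d + mean_Y * y) d y = d + mean_Y * y"
  unfolding cstep_half_coords by (rule centred_step_linear[OF mean_Y_fixed])

lemma cstep_cross:
  "cstep (\<lambda>d y. d * (y - mean_Y)) d y = (p - q)/2 * (d * (y - mean_Y)) + cstep (\<lambda>d y. (y - mean_Y)^2) 0 y"
  unfolding cstep_half_coords by (rule centred_step_cross[OF mean_Y_fixed])

lemma cstep_qpot: "cstep qpot d y = qpot d y + sigma2"
proof -
  have "qpot = (\<lambda>d y. d^2 + 2*mean_Y*d*y - 2*(mean_Y^2*(1 + mean_Y)*y - (1/2 + mean_Y)*mean_Y2*y^2))"
    by (simp add: fun_eq_iff qpot_def corr_def)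
  then show ?thesis
    unfolding cstep_half_coords sigma2_def by (simp only: centred_step_quadratic[OF mean_Y_fixed mean_Y2_fixed])
qed

lemma norm_cstep_le:
  assumes "\<And>d' y'. \<bar>y'\<bar> \<le> 1 \<Longrightarrow> \<bar>d'\<bar> \<le> 2 \<Longrightarrow> norm (G d' y') \<le> B" and "\<bar>y\<bar> \<le> 1"
  shows "norm (cstep G 0 y) \<le> B"
  using assms abs_mean_Y_less p_pos q_pos r_pos pqr_sum by (intro norm_centred_step_le) auto

lemma abs_corr_le: "\<bar>y\<bar> \<le> 1 \<Longrightarrow> \<bar>corr y\<bar> \<le> corr_bound"
proof -
  assume y: "\<bar>y\<bar> \<le> 1"
  have "\<bar>corr y\<bar> \<le> \<bar>mean_Y^2 * (1 + mean_Y) * y\<bar> + \<bar>(1/2 + mean_Y) * mean_Y2 * y^2\<bar>"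
    unfolding corr_def by (rule abs_triangle_ineq4)
  also have "\<dots> = \<bar>mean_Y^2 * (1 + mean_Y)\<bar> * \<bar>y\<bar> + \<bar>(1/2 + mean_Y) * mean_Y2\<bar> * y^2"
    by (simp only: abs_mult abs_power2)
  also have "\<dots> \<le> \<bar>mean_Y^2 * (1 + mean_Y)\<bar> * 1 + \<bar>(1/2 + mean_Y) * mean_Y2\<bar> * 1"
    using y by (intro add_mono mult_left_mono) (auto simp: abs_square_le_1)
  finally show ?thesis unfolding corr_bound_def by simp
qed

lemma corr_bound_nonneg: "0 \<le> corr_bound"
  unfolding corr_bound_def by simp

end

section \<open>An approximate eigenfunction of the step operator\<close>

lemma iexp_taylor2:
  "cmod (iexp x - (1 + \<i> * complex_of_real x - complex_of_real (x^2/2))) \<le> \<bar>x\<bar>^3 / 6"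
proof -
  have "(\<Sum>k\<le>2. (\<i> * complex_of_real x)^k / fact k) = 1 + \<i> * complex_of_real x - complex_of_real (x^2/2)"
    by (simp add: numeral_2_eq_2 power2_eq_square field_simps)
  then show ?thesis using iexp_approx1[of x 2] by (simp add: numeral_3_eq_3 numeral_2_eq_2)
qed

lemma norm_ii_add_le: "cmod (\<i> * complex_of_real a + complex_of_real b) \<le> \<bar>a\<bar> + \<bar>b\<bar>"
  by (rule order.trans[OF norm_triangle_ineq]) (simp add: norm_mult)

lemma norm_one_ii_add_le:
  assumes "\<bar>s\<bar> \<le> 1" "\<bar>h\<bar> \<le> 1" "\<bar>k\<bar> \<le> B"
  shows "cmod (1 + \<i> * complex_of_real (s * h) + complex_of_real (s^2 * k)) \<le> 2 + B"
proof -
  have "cmod (1 + \<i> * complex_of_real (s * h) + complex_of_real (s^2 * k))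
      \<le> norm (1::complex) + cmod (\<i> * complex_of_real (s * h) + complex_of_real (s^2 * k))"
    unfolding add.assoc by (rule norm_triangle_ineq)
  also have "\<dots> \<le> 1 + (\<bar>s * h\<bar> + \<bar>s^2 * k\<bar>)"
    using norm_ii_add_le[of "s * h" "s^2 * k"] by simp
  also have "\<dots> \<le> 1 + (1 * 1 + 1 * B)"
  proof (intro add_left_mono add_mono)
    show "\<bar>s * h\<bar> \<le> 1 * 1" unfolding abs_mult using assms by (intro mult_mono) auto
    have "s^2 \<le> 1" using assms by (simp add: abs_square_le_1)
    then show "\<bar>s^2 * k\<bar> \<le> 1 * B" unfolding abs_mult using assms by (intro mult_mono) auto
  qed
  finally show ?thesis by simp
qed

lemma iexp_mult_approx:
  fixes s d h k B :: real
  assumes s: "\<bar>s\<bar> \<le> 1" and d: "\<bar>d\<bar> \<le> 2" and h: "\<bar>h\<bar> \<le> 1" and k: "\<bar>k\<bar> \<le> B"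
  shows "cmod (iexp (s * d) * (1 + \<i> * complex_of_real (s * h) + complex_of_real (s^2 * k))
           - (1 + \<i> * complex_of_real (s * (d + h)) + complex_of_real (s^2 * (k - d^2/2 - d * h))))
         \<le> (6 + 6 * B) * \<bar>s\<bar>^3"
proof -
  define f where "f = 1 + \<i> * complex_of_real (s * h) + complex_of_real (s^2 * k)"
  define R where "R = iexp (s * d) - (1 + \<i> * complex_of_real (s * d) - complex_of_real ((s * d)^2/2))"
  define u where "u = s^3 * (d * k - d^2 * h / 2)"
  define v where "v = - (s^4 * d^2 * k / 2)"
  have B: "0 \<le> B" using k by simp
  have d2: "d^2 \<le> 4" using abs_le_square_iff[of d 2] d by simp
  have "cmod R \<le> \<bar>d\<bar>^3 * \<bar>s\<bar>^3 / 6"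
    using iexp_taylor2[of "s * d"] unfolding R_def by (simp add: abs_mult power_mult_distrib mult.commute)
  also have "\<dots> \<le> 8/6 * \<bar>s\<bar>^3" using mult_right_mono[OF power_mono[OF d, of 3], of "\<bar>s\<bar>^3"] by simp
  finally have R: "cmod R \<le> 8/6 * \<bar>s\<bar>^3" .
  have "\<bar>d * k - d^2 * h / 2\<bar> \<le> \<bar>d\<bar> * \<bar>k\<bar> + d^2 * \<bar>h\<bar> / 2"
    by (rule order.trans[OF abs_triangle_ineq4]) (simp add: abs_mult)
  also have "\<dots> \<le> 2 * B + 4 * 1 / 2"
    using d k h d2 by (intro add_mono mult_mono divide_right_mono) auto
  finally have u: "\<bar>u\<bar> \<le> (2 * B + 2) * \<bar>s\<bar>^3"
    unfolding u_def abs_mult power_abs by (simp add: mult.commute mult_left_mono)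
  have "\<bar>v\<bar> = \<bar>s\<bar>^4 * (d^2 * \<bar>k\<bar>) / 2" unfolding v_def by (simp add: abs_mult power_abs)
  also have "\<dots> \<le> \<bar>s\<bar>^3 * (4 * B) / 2"
    using s d2 k by (intro divide_right_mono mult_mono power_decreasing) auto
  finally have v: "\<bar>v\<bar> \<le> 2 * B * \<bar>s\<bar>^3" by simp
  have "iexp (s * d) * f - (1 + \<i> * complex_of_real (s * (d + h)) + complex_of_real (s^2 * (k - d^2/2 - d * h)))
      = R * f + (\<i> * complex_of_real u + complex_of_real v)"
    unfolding R_def f_def u_def v_def by (simp add: algebra_simps power2_eq_square power3_eq_cube power4_eq_xxxx)
  also have "cmod \<dots> \<le> cmod R * cmod f + (\<bar>u\<bar> + \<bar>v\<bar>)"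
    by (rule order.trans[OF norm_triangle_ineq add_mono]) (simp_all add: norm_mult norm_ii_add_le)
  also have "\<dots> \<le> 8/6 * \<bar>s\<bar>^3 * (2 + B) + ((2 * B + 2) * \<bar>s\<bar>^3 + 2 * B * \<bar>s\<bar>^3)"
    using R norm_one_ii_add_le[OF s h k] u v B unfolding f_def by (intro add_mono mult_mono) auto
  also have "\<dots> \<le> (6 + 6 * B) * \<bar>s\<bar>^3"
    using B by (simp add: algebra_simps)
  finally show ?thesis unfolding f_def .
qed
context erw_params
begin

text \<open>The correction \<open>char_corr\<close> is chosen so that \<open>char_quad\<close>, the second-order expansion of
  \<open>iexp (s d) * char_corr s y\<close>, is a combination of \<open>1\<close>, the invariant \<open>d + mean_Y y\<close> and the
  potential \<open>qpot\<close>, on which \<open>cstep\<close> acts explicitly.\<close>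

definition char_corr :: "real \<Rightarrow> real \<Rightarrow> complex" where
  "char_corr s y = 1 + \<i> * complex_of_real (s * (mean_Y * y)) + complex_of_real (s^2 * corr y)"

definition char_factor :: "real \<Rightarrow> real" where "char_factor s = 1 - sigma2 * s^2 / 2"

definition char_err :: real where "char_err = 6 + 6 * corr_bound + sigma2 * (1 + corr_bound) / 2"

definition char_quad :: "real \<Rightarrow> real \<Rightarrow> real \<Rightarrow> complex" where
  "char_quad s d y = 1 + \<i> * complex_of_real (s * (d + mean_Y * y))
     + complex_of_real (s^2 * (corr y - d^2/2 - d * (mean_Y * y)))"

lemma norm_char_corr_sub_1_le:
  assumes "\<bar>y\<bar> \<le> 1"
  shows "cmod (char_corr s y - 1) \<le> \<bar>s\<bar> + s^2 * corr_bound"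
proof -
  have "char_corr s y - 1 = \<i> * complex_of_real (s * (mean_Y * y)) + complex_of_real (s^2 * corr y)"
    unfolding char_corr_def by simp
  then have "cmod (char_corr s y - 1) \<le> \<bar>s * (mean_Y * y)\<bar> + \<bar>s^2 * corr y\<bar>"
    using norm_ii_add_le by metis
  also have "\<dots> \<le> \<bar>s\<bar> * 1 + s^2 * corr_bound"
  proof (intro add_mono)
    have "\<bar>mean_Y\<bar> * \<bar>y\<bar> \<le> 1" using abs_mean_Y_less assms by (intro mult_le_one) auto
    from mult_left_mono[OF this, of "\<bar>s\<bar>"] show "\<bar>s * (mean_Y * y)\<bar> \<le> \<bar>s\<bar> * 1" by (simp add: abs_mult)
    show "\<bar>s^2 * corr y\<bar> \<le> s^2 * corr_bound" using abs_corr_le[OF assms] by (simp add: abs_mult mult_left_mono)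
  qed
  finally show ?thesis by simp
qed

lemma cstep_char_quad: "cstep (char_quad s) 0 y = char_corr s y - complex_of_real (sigma2 * s^2 / 2)"
proof -
  have "cstep (char_quad s) 0 y = cstep (\<lambda>d y. complex_of_real 1 * 1
      + complex_of_real (d + mean_Y * y) * (\<i> * complex_of_real s)
      + complex_of_real (qpot d y) * complex_of_real (-(s^2) / 2)) 0 y"
    by (rule arg_cong[where f="\<lambda>G. cstep G 0 y"])
      (auto simp: fun_eq_iff char_quad_def qpot_def algebra_simps power2_eq_square)
  also have "\<dots> = complex_of_real (cstep (\<lambda>d y. 1) 0 y) * 1
      + complex_of_real (cstep (\<lambda>d y. d + mean_Y * y) 0 y) * (\<i> * complex_of_real s)
      + complex_of_real (cstep qpot 0 y) * complex_of_real (-(s^2) / 2)"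
    by (simp only: centred_step_add centred_step_of_real_mult)
  also have "\<dots> = char_corr s y - complex_of_real (sigma2 * s^2 / 2)"
    unfolding cstep_const cstep_linear cstep_qpot by (simp add: char_corr_def qpot_def algebra_simps power2_eq_square)
  finally show ?thesis .
qed

lemma cstep_char_corr:
  assumes s: "\<bar>s\<bar> \<le> 1" and y: "\<bar>y\<bar> \<le> 1"
  shows "cmod (cstep (\<lambda>d y'. iexp (s * d) * char_corr s y') 0 y - char_factor s * char_corr s y) \<le> char_err * \<bar>s\<bar>^3"
proof -
  have "cmod (cstep (\<lambda>d y'. iexp (s * d) * char_corr s y' - char_quad s d y') 0 y) \<le> (6 + 6 * corr_bound) * \<bar>s\<bar>^3"
  proof (rule norm_cstep_le[OF _ y])
    fix d' y' :: real assume y': "\<bar>y'\<bar> \<le> 1" and d': "\<bar>d'\<bar> \<le> 2"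
    have "\<bar>mean_Y * y'\<bar> \<le> 1" using abs_mean_Y_less y' by (simp add: abs_mult mult_le_one)
    from iexp_mult_approx[OF s d' this abs_corr_le[OF y']]
    show "cmod (iexp (s * d') * char_corr s y' - char_quad s d' y') \<le> (6 + 6 * corr_bound) * \<bar>s\<bar>^3"
      unfolding char_corr_def char_quad_def .
  qed
  moreover have "cmod (cstep (char_quad s) 0 y - char_factor s * char_corr s y) \<le> sigma2 * (1 + corr_bound) / 2 * \<bar>s\<bar>^3"
  proof -
    have eq: "cstep (char_quad s) 0 y - char_factor s * char_corr s y
        = complex_of_real (sigma2 * s^2 / 2) * (char_corr s y - 1)"
      unfolding cstep_char_quad char_factor_def by (simp add: algebra_simps)
    have "cmod (cstep (char_quad s) 0 y - char_factor s * char_corr s y) = sigma2 * s^2 / 2 * cmod (char_corr s y - 1)"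
      unfolding eq norm_mult norm_of_real using sigma2_pos by simp
    also have "\<dots> \<le> sigma2 * s^2 / 2 * (\<bar>s\<bar> + s^2 * corr_bound)"
      using sigma2_pos norm_char_corr_sub_1_le[OF y] by (simp add: mult_left_mono)
    also have "\<dots> \<le> sigma2 * s^2 / 2 * (\<bar>s\<bar> + \<bar>s\<bar> * corr_bound)"
    proof -
      have "s^2 \<le> \<bar>s\<bar>" using power_decreasing[of 1 2 "\<bar>s\<bar>"] s by simp
      then show ?thesis using sigma2_pos corr_bound_nonneg
        by (intro mult_left_mono add_left_mono mult_right_mono) auto
    qed
    also have "\<dots> = sigma2 * (1 + corr_bound) / 2 * \<bar>s\<bar>^3"
      by (simp add: power2_eq_square power3_eq_cube algebra_simps)
    finally show ?thesis .
  qed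
  moreover have "cstep (\<lambda>d y'. iexp (s * d) * char_corr s y') 0 y - char_factor s * char_corr s y
      = cstep (\<lambda>d y'. iexp (s * d) * char_corr s y' - char_quad s d y') 0 y
        + (cstep (char_quad s) 0 y - char_factor s * char_corr s y)"
    by (simp add: centred_step_diff)
  ultimately show ?thesis
    unfolding char_err_def by (metis (no_types, lifting) add_mono distrib_right norm_triangle_le)
qed

end

section \<open>Sample paths of the walk started from 1\<close>

text \<open>Sample points are read through \<open>ternary\<close>, so that the path functions below take values in
  \<open>{-1, 0, 1}\<close> everywhere and not only almost surely.\<close>

definition ternary :: "real \<Rightarrow> real" where
  "ternary v = (if v = 1 then 1 else if v = -1 then -1 else 0)"

lemma ternary_range: "ternary v \<in> {-1,0,1}"
  unfolding ternary_def by auto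

lemma measurable_ternary[measurable]: "ternary \<in> borel_measurable borel"
  unfolding ternary_def by measurable

lemma ternary_id: "v \<in> {1,-1,0} \<Longrightarrow> ternary v = v"
  unfolding ternary_def by auto

text \<open>A sample \<open>g\<close> lists \<open>g (Inl n) = \<eta>\<^sub>n\<close> and \<open>g (Inr n) = K\<^sub>n\<close>; \<open>path_step g n\<close> is the
  step \<open>Y\<^sub>n\<close> of the walk with \<open>X\<^sub>1 = 1\<close>, where \<open>Y\<^sub>n\<^sub>+\<^sub>1 = \<eta>\<^sub>n\<^sub>+\<^sub>1 Y\<^sub>1\<close> if \<open>K\<^sub>n\<^sub>+\<^sub>1 = 1\<close> and
  \<open>\<eta>\<^sub>n\<^sub>+\<^sub>1 Y\<^sub>n\<close> otherwise. The value at 0 is junk.\<close>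

fun path_step :: "(nat + nat \<Rightarrow> real) \<Rightarrow> nat \<Rightarrow> real" where
  "path_step g 0 = 1"
| "path_step g (Suc n) =
     (if n = 0 then 1
      else ternary (g (Inl (Suc n))) * (if n = 1 \<or> g (Inr (Suc n)) = 1 then 1 else path_step g n))"

definition path_sum :: "(nat + nat \<Rightarrow> real) \<Rightarrow> nat \<Rightarrow> real" where
  "path_sum g n = (\<Sum>k=1..n. path_step g k)"

definition path_state :: "(nat + nat \<Rightarrow> real) \<Rightarrow> nat \<Rightarrow> real \<times> real \<times> real" where
  "path_state g n = (ternary (g (Inl 1)), path_sum g n, path_step g n)"

definition path_coords :: "nat \<Rightarrow> (nat + nat) set" where
  "path_coords n = Inl ` {1..n} \<union> Inr ` {3..n}"

lemma path_step_range: "path_step g n \<in> {-1,0,1}"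
  by (induction n) (auto simp: ternary_def)

lemma path_sum_Suc: "path_sum g (Suc n) = path_sum g n + path_step g (Suc n)"
  unfolding path_sum_def by simp

lemma path_sum_int: "\<exists>i::int. path_sum g n = of_int i \<and> - int n \<le> i \<and> i \<le> int n"
proof (induction n)
  case 0 then show ?case by (simp add: path_sum_def)
next
  case (Suc n)
  then obtain i where i: "path_sum g n = of_int i" "- int n \<le> i" "i \<le> int n" by blast
  have "path_step g (Suc n) \<in> {-1,0,1}" by (rule path_step_range)
  then consider "path_step g (Suc n) = -1" | "path_step g (Suc n) = 0" | "path_step g (Suc n) = 1" by auto
  then show ?case
  proof cases
    case 1 then show ?thesis using i by (intro exI[of _ "i - 1"]) (simp add: path_sum_Suc)
  next
    case 2 then show ?thesis using i by (intro exI[of _ "i"]) (simp add: path_sum_Suc)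
  next
    case 3 then show ?thesis using i by (intro exI[of _ "i + 1"]) (simp add: path_sum_Suc)
  qed
qed

lemma path_coords_mono: "m \<le> n \<Longrightarrow> path_coords m \<subseteq> path_coords n"
  unfolding path_coords_def by auto

lemma path_step_local: "(\<And>i. i \<in> path_coords n \<Longrightarrow> g i = g' i) \<Longrightarrow> path_step g n = path_step g' n"
proof (induction n)
  case 0 then show ?case by simp
next
  case (Suc n)
  have IH: "path_step g n = path_step g' n" using Suc.prems path_coords_mono[of n "Suc n"] by (intro Suc.IH) auto
  show ?case
  proof (cases "n = 0")
    case True then show ?thesis by simp
  next
    case False
    have a: "g (Inl (Suc n)) = g' (Inl (Suc n))" using Suc.prems by (auto simp: path_coords_def)
    show ?thesis
    proof (cases "n = 1")
      case True then show ?thesis using a by simp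
    next
      case n1: False
      have b: "g (Inr (Suc n)) = g' (Inr (Suc n))" using Suc.prems False n1 by (auto simp: path_coords_def)
      show ?thesis using a b IH by simp
    qed
  qed
qed

lemma path_sum_local: assumes "\<And>i. i \<in> path_coords n \<Longrightarrow> g i = g' i" shows "path_sum g n = path_sum g' n"
  unfolding path_sum_def
proof (intro sum.cong refl path_step_local)
  fix k i assume "k \<in> {1..n}" "i \<in> path_coords k"
  then show "g i = g' i" using path_coords_mono[of k n] assms by auto
qed

lemma path_state_local: "1 \<le> n \<Longrightarrow> (\<And>i. i \<in> path_coords n \<Longrightarrow> g i = g' i) \<Longrightarrow> path_state g n = path_state g' n"
  unfolding path_state_def using path_sum_local[of n g g'] path_step_local[of n g g'] by (auto simp: path_coords_def)

lemma measurable_path_step: "path_coords n \<subseteq> J \<Longrightarrow> (\<lambda>g. path_step g n) \<in> borel_measurable (PiM J (\<lambda>_. borel))"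
proof (induction n)
  case 0 then show ?case by simp
next
  case (Suc n)
  have IH: "(\<lambda>g. path_step g n) \<in> borel_measurable (PiM J (\<lambda>_. borel))"
    using Suc.prems path_coords_mono[of n "Suc n"] by (intro Suc.IH) auto
  show ?case
  proof (cases "n = 0")
    case True then show ?thesis by simp
  next
    case False
    have a: "Inl (Suc n) \<in> J" using Suc.prems by (auto simp: path_coords_def)
    have ma: "(\<lambda>g. ternary (g (Inl (Suc n)))) \<in> borel_measurable (PiM J (\<lambda>_. borel))"
      using a by measurable
    show ?thesis
    proof (cases "n = 1")
      case True then show ?thesis using ma by simp
    next
      case n1: False
      have b: "Inr (Suc n) \<in> J" using Suc.prems False n1 by (auto simp: path_coords_def)
      have mb: "(\<lambda>g. g (Inr (Suc n))) \<in> borel_measurable (PiM J (\<lambda>_. borel))"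
        using b by measurable
      have "(\<lambda>g. ternary (g (Inl (Suc n))) * (if g (Inr (Suc n)) = 1 then 1 else path_step g n))
          \<in> borel_measurable (PiM J (\<lambda>_. borel))"
        using ma mb IH by measurable
      then show ?thesis using False n1 by simp
    qed
  qed
qed

lemma measurable_path_sum: "path_coords n \<subseteq> J \<Longrightarrow> (\<lambda>g. path_sum g n) \<in> borel_measurable (PiM J (\<lambda>_. borel))"
  unfolding path_sum_def
proof (intro borel_measurable_sum measurable_path_step)
  fix k assume "path_coords n \<subseteq> J" "k \<in> {1..n}"
  then show "path_coords k \<subseteq> J" using path_coords_mono[of k n] by auto
qed

lemma path_state_sets: assumes "1 \<le> n" "path_coords n \<subseteq> J"
  shows "{g \<in> space (PiM J (\<lambda>_. borel)). path_state g n = v} \<in> sets (PiM J (\<lambda>_. borel))"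
proof -
  have a: "Inl 1 \<in> J" using assms by (auto simp: path_coords_def)
  have [measurable]: "(\<lambda>g. ternary (g (Inl 1))) \<in> borel_measurable (PiM J (\<lambda>_. borel))" using a by measurable
  have [measurable]: "(\<lambda>g. path_sum g n) \<in> borel_measurable (PiM J (\<lambda>_. borel))"
    by (rule measurable_path_sum[OF assms(2)])
  have [measurable]: "(\<lambda>g. path_step g n) \<in> borel_measurable (PiM J (\<lambda>_. borel))"
    by (rule measurable_path_step[OF assms(2)])
  have "{g \<in> space (PiM J (\<lambda>_. borel)). path_state g n = v} =
     {g \<in> space (PiM J (\<lambda>_. borel)). ternary (g (Inl 1)) = fst v \<and> path_sum g n = fst (snd v) \<and> path_step g n = snd (snd v)}"
    unfolding path_state_def by (cases v) auto
  also have "\<dots> \<in> sets (PiM J (\<lambda>_. borel))" by measurable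
  finally show ?thesis .
qed

section \<open>The walk as a Markov chain\<close>

lemma (in prob_space) integral_finite_range:
  fixes X :: "'a \<Rightarrow> 'b" and F :: "'b \<Rightarrow> 'c::{banach,second_countable_topology}"
  assumes S: "finite S" and VS: "\<And>w. w \<in> space M \<Longrightarrow> X w \<in> S"
    and ev: "\<And>v. v \<in> S \<Longrightarrow> {w\<in>space M. X w = v} \<in> events"
  shows "integral\<^sup>L M (\<lambda>w. F (X w)) = (\<Sum>v\<in>S. prob {w\<in>space M. X w = v} *\<^sub>R F v)"
proof -
  have "integral\<^sup>L M (\<lambda>w. F (X w)) = integral\<^sup>L M (\<lambda>w. \<Sum>v\<in>S. indicator {w\<in>space M. X w = v} w *\<^sub>R F v)"
  proof (rule Bochner_Integration.integral_cong[OF refl])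
    fix w assume w: "w \<in> space M"
    have "(\<Sum>v\<in>S. indicator {w\<in>space M. X w = v} w *\<^sub>R F v) = (\<Sum>v\<in>S. if v = X w then F v else 0)"
      using w by (intro sum.cong refl) (auto simp: indicator_def)
    also have "\<dots> = F (X w)" using VS[OF w] S by (simp add: sum.delta')
    finally show "F (X w) = (\<Sum>v\<in>S. indicator {w\<in>space M. X w = v} w *\<^sub>R F v)" by simp
  qed
  also have "\<dots> = (\<Sum>v\<in>S. integral\<^sup>L M (\<lambda>w. indicator {w\<in>space M. X w = v} w *\<^sub>R F v))"
    using ev by (intro Bochner_Integration.integral_sum integrable_scaleR_left integrable_real_indicator)
      (auto simp: less_top[symmetric])
  also have "\<dots> = (\<Sum>v\<in>S. prob {w\<in>space M. X w = v} *\<^sub>R F v)"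
  proof (intro sum.cong refl)
    fix v assume "v \<in> S"
    have "integral\<^sup>L M (\<lambda>w. indicator {w\<in>space M. X w = v} w *\<^sub>R F v)
        = integral\<^sup>L M (indicator {w\<in>space M. X w = v}) *\<^sub>R F v"
      using ev[OF \<open>v \<in> S\<close>] by (intro integral_scaleR_left integrable_real_indicator) (auto simp: less_top[symmetric])
    also have "\<dots> = prob {w\<in>space M. X w = v} *\<^sub>R F v"
      by (simp add: Int_absorb2 Collect_subset[of "space M", simplified] inf.absorb1)
    finally show "integral\<^sup>L M (\<lambda>w. indicator {w\<in>space M. X w = v} w *\<^sub>R F v) = prob {w\<in>space M. X w = v} *\<^sub>R F v" .
  qed
  finally show ?thesis .
qed

locale erw_prob = erw_params p q r + prob_space M
  for p q r :: real and M :: "'a measure" +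
  fixes X1 :: "'a \<Rightarrow> real" and eta :: "nat \<Rightarrow> 'a \<Rightarrow> real" and K :: "nat \<Rightarrow> 'a \<Rightarrow> nat"
  assumes X1_meas: "X1 \<in> borel_measurable M"
    and eta_meas: "\<And>n. 2 \<le> n \<Longrightarrow> eta n \<in> borel_measurable M"
    and K_meas: "\<And>n. 3 \<le> n \<Longrightarrow> K n \<in> measurable M (count_space UNIV)"
    and prob_X1: "measure M {w \<in> space M. X1 w = 1} = p" "measure M {w \<in> space M. X1 w = -1} = q"
      "measure M {w \<in> space M. X1 w = 0} = r"
    and prob_eta_1: "\<And>n. 2 \<le> n \<Longrightarrow> measure M {w \<in> space M. eta n w = 1} = p"
    and prob_eta_m1: "\<And>n. 2 \<le> n \<Longrightarrow> measure M {w \<in> space M. eta n w = -1} = q"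
    and prob_eta_0: "\<And>n. 2 \<le> n \<Longrightarrow> measure M {w \<in> space M. eta n w = 0} = r"
    and prob_K_1: "\<And>n. 3 \<le> n \<Longrightarrow> measure M {w \<in> space M. K n w = 1} = 1/2"
    and prob_K_last: "\<And>n. 3 \<le> n \<Longrightarrow> measure M {w \<in> space M. K n w = n - 1} = 1/2"
    and indep: "prob_space.indep_vars M (\<lambda>_. borel)
           (\<lambda>i. case i of Inl n \<Rightarrow> (if n = 1 then X1 else eta n)
                        | Inr n \<Rightarrow> (\<lambda>w. real (K n w)))
           (Inl ` {n. 1 \<le> n} \<union> Inr ` {n. 3 \<le> n})"
begin

definition coord :: "nat + nat \<Rightarrow> 'a \<Rightarrow> real" where
  "coord = (\<lambda>i. case i of Inl n \<Rightarrow> (if n = 1 then X1 else eta n) | Inr n \<Rightarrow> (\<lambda>w. real (K n w)))"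

definition coords :: "(nat + nat) set" where
  "coords = Inl ` {n::nat. 1 \<le> n} \<union> Inr ` {n::nat. 3 \<le> n}"

definition sample :: "'a \<Rightarrow> nat + nat \<Rightarrow> real" where "sample w = (\<lambda>i. coord i w)"

definition state :: "nat \<Rightarrow> 'a \<Rightarrow> real \<times> real \<times> real" where
  "state n w = path_state (sample w) n"

lemma indep_coord: "indep_vars (\<lambda>_. borel) coord coords"
  using indep unfolding coord_def coords_def .

lemma measurable_coord: "i \<in> coords \<Longrightarrow> coord i \<in> borel_measurable M"
  using indep_coord unfolding indep_vars_def2 by auto

lemma path_coords_subset: "path_coords n \<subseteq> coords" unfolding path_coords_def coords_def by auto

lemma sample_Inl: "sample w (Inl n) = (if n = 1 then X1 w else eta n w)" unfolding sample_def coord_def by simp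

lemma sample_Inr: "sample w (Inr n) = real (K n w)" unfolding sample_def coord_def by simp

lemma measurable_restrict_sample: "J \<subseteq> coords \<Longrightarrow> (\<lambda>w. restrict (sample w) J) \<in> measurable M (PiM J (\<lambda>_. borel))"
  unfolding sample_def using measurable_coord by (intro measurable_restrict) auto

lemma state_restrict: "1 \<le> n \<Longrightarrow> state n w = path_state (restrict (sample w) (path_coords n)) n"
  unfolding state_def by (intro path_state_local) auto

lemma state_sets: assumes "1 \<le> n" shows "{w\<in>space M. state n w = v} \<in> events"
proof -
  have "{w\<in>space M. state n w = v} = (\<lambda>w. restrict (sample w) (path_coords n))
      -` {g \<in> space (PiM (path_coords n) (\<lambda>_. borel)). path_state g n = v} \<inter> space M"
    using state_restrict[OF assms] by (auto simp: space_PiM)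
  also have "\<dots> \<in> events"
    by (rule measurable_sets[OF measurable_restrict_sample[OF path_coords_subset] path_state_sets[OF assms order.refl]])
  finally show ?thesis .
qed

definition eta_ternary :: "nat \<Rightarrow> 'a \<Rightarrow> real" where "eta_ternary n w = ternary (eta n w)"

definition copies_first :: "nat \<Rightarrow> 'a \<Rightarrow> bool" where "copies_first n w = (K n w = 1)"

definition step_prob :: "real \<Rightarrow> real" where
  "step_prob e = (if e = 1 then p else if e = -1 then q else if e = 0 then r else 0)"

lemma K_sets: assumes "3 \<le> n" shows "{w\<in>space M. K n w = c} \<in> events"
  using K_meas[OF assms] by measurable

lemma AE_three_values:
  fixes f :: "'a \<Rightarrow> real"
  assumes f: "f \<in> borel_measurable M" and f1: "prob {w\<in>space M. f w = 1} = p"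
    and f2: "prob {w\<in>space M. f w = -1} = q" and f3: "prob {w\<in>space M. f w = 0} = r"
  shows "AE w in M. f w \<in> {1,-1,0}"
proof -
  have ev: "{w\<in>space M. f w = c} \<in> events" for c
    using f by measurable
  have "prob ({w\<in>space M. f w = 1} \<union> {w\<in>space M. f w = -1}) = p + q"
    using ev f1 f2 by (subst finite_measure_Union) auto
  then have "prob ({w\<in>space M. f w = 1} \<union> {w\<in>space M. f w = -1} \<union> {w\<in>space M. f w = 0}) = p + q + r"
    using ev f3 by (subst finite_measure_Union) auto
  moreover have "{w\<in>space M. f w \<in> {1,-1,0}} = {w\<in>space M. f w = 1} \<union> {w\<in>space M. f w = -1} \<union> {w\<in>space M. f w = 0}"
    by auto
  ultimately have "prob {w\<in>space M. f w \<in> {1,-1,0}} = 1" using pqr_sum by simp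
  then show ?thesis using AE_prob_1 by force
qed

lemma prob_ternary:
  fixes f :: "'a \<Rightarrow> real"
  assumes f: "f \<in> borel_measurable M" and f1: "prob {w\<in>space M. f w = 1} = p"
    and f2: "prob {w\<in>space M. f w = -1} = q" and f3: "prob {w\<in>space M. f w = 0} = r"
  shows "prob {w\<in>space M. ternary (f w) = e} = step_prob e"
proof -
  have "prob {w\<in>space M. ternary (f w) = e} = prob {w\<in>space M. f w = e \<and> e \<in> {1,-1,0}}"
  proof (rule measure_eq_AE)
    show "AE w in M. (w \<in> {w\<in>space M. ternary (f w) = e}) = (w \<in> {w\<in>space M. f w = e \<and> e \<in> {1,-1,0}})"
      using AE_three_values[OF assms] by eventually_elim (auto simp: ternary_def)
  next
    show "{w\<in>space M. ternary (f w) = e} \<in> events" using f by measurable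
  next
    show "{w\<in>space M. f w = e \<and> e \<in> {1,-1,0}} \<in> events" using f by measurable
  qed
  then show ?thesis using f1 f2 f3 by (auto simp: step_prob_def)
qed

lemma prob_eta_ternary: "2 \<le> n \<Longrightarrow> prob {w\<in>space M. eta_ternary n w = e} = step_prob e"
  unfolding eta_ternary_def by (rule prob_ternary[OF eta_meas prob_eta_1 prob_eta_m1 prob_eta_0])

lemma prob_ternary_X1: "prob {w\<in>space M. ternary (X1 w) = e} = step_prob e"
  by (rule prob_ternary[OF X1_meas prob_X1])

lemma AE_X1: "AE w in M. X1 w \<in> {1,-1,0}"
  by (rule AE_three_values[OF X1_meas prob_X1])

lemma AE_eta: "2 \<le> n \<Longrightarrow> AE w in M. eta n w \<in> {1,-1,0}"
  by (rule AE_three_values[OF eta_meas prob_eta_1 prob_eta_m1 prob_eta_0])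

lemma prob_copies_first: assumes "3 \<le> n" shows "prob {w\<in>space M. copies_first n w = k} = 1/2"
proof (cases k)
  case True
  then show ?thesis using prob_K_1[OF assms] unfolding copies_first_def by simp
next
  case False
  have "{w\<in>space M. copies_first n w = k} = space M - {w\<in>space M. K n w = 1}" using False unfolding copies_first_def
    by auto
  then show ?thesis using prob_K_1[OF assms] K_sets[OF assms] by (simp add: prob_compl)
qed

lemma AE_K: assumes "3 \<le> n" shows "AE w in M. K n w = 1 \<or> K n w = n - 1"
proof -
  have "prob ({w\<in>space M. K n w = 1} \<union> {w\<in>space M. K n w = n - 1}) = 1/2 + 1/2"
    using prob_K_1[OF assms] prob_K_last[OF assms] K_sets[OF assms] assms by (subst finite_measure_Union) auto
  moreover have "{w\<in>space M. K n w = 1 \<or> K n w = n - 1} = {w\<in>space M. K n w = 1} \<union> {w\<in>space M. K n w = n - 1}"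
    by auto
  ultimately have "prob {w\<in>space M. K n w = 1 \<or> K n w = n - 1} = 1" by simp
  then show ?thesis using AE_prob_1 by force
qed

lemma indep_state_step:
  assumes n: "2 \<le> n"
  shows "prob ({w\<in>space M. state n w = v} \<inter> {w\<in>space M. eta_ternary (Suc n) w = e} \<inter> {w\<in>space M. copies_first (Suc n) w = k})
       = prob {w\<in>space M. state n w = v} * prob {w\<in>space M. eta_ternary (Suc n) w = e}
         * prob {w\<in>space M. copies_first (Suc n) w = k}"
proof -
  define J :: "nat \<Rightarrow> (nat + nat) set" where
    "J j = (if j = 0 then path_coords n else if j = 1 then {Inl (Suc n)} else {Inr (Suc n)})" for j
  define A :: "nat \<Rightarrow> (nat + nat \<Rightarrow> real) set" where
    "A j = (if j = 0 then {g \<in> space (PiM (J 0) (\<lambda>_. borel)). path_state g n = v}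
      else if j = 1 then {g \<in> space (PiM (J 1) (\<lambda>_. borel)). ternary (g (Inl (Suc n))) = e}
      else {g \<in> space (PiM (J 2) (\<lambda>_. borel)). (g (Inr (Suc n)) = 1) = k})" for j
  define B where "B j = (\<lambda>w. restrict (sample w) (J j)) -` A j \<inter> space M" for j
  have "indep_vars (\<lambda>j. PiM (J j) (\<lambda>_. borel)) (\<lambda>j w. restrict (sample w) (J j)) {0,1,2}"
    unfolding sample_def
    by (rule indep_vars_restrict[OF indep_coord])
      (use n in \<open>auto simp: J_def path_coords_def coords_def disjoint_family_on_def\<close>)
  moreover have "A 0 \<in> sets (PiM (J 0) (\<lambda>_. borel))"
    using path_state_sets[OF _ order.refl] n by (simp add: A_def J_def)
  moreover have "A 1 \<in> sets (PiM (J 1) (\<lambda>_. borel))"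
    unfolding A_def J_def by simp measurable
  moreover have "A 2 \<in> sets (PiM (J 2) (\<lambda>_. borel))"
    unfolding A_def J_def by simp measurable
  ultimately have "prob (\<Inter>j\<in>{0,1,2}. B j) = (\<Prod>j\<in>{0,1,2}. prob (B j))"
    unfolding B_def by (intro indep_varsD) auto
  moreover have "B 0 = {w\<in>space M. state n w = v}"
    using state_restrict[of n] n unfolding A_def B_def J_def by (auto simp: space_PiM)
  moreover have "B 1 = {w\<in>space M. eta_ternary (Suc n) w = e}" "B 2 = {w\<in>space M. copies_first (Suc n) w = k}"
    using n unfolding A_def B_def J_def eta_ternary_def copies_first_def
      by (auto simp: space_PiM sample_Inl sample_Inr)
  ultimately show ?thesis by (simp add: Int_assoc Int_ac)
qed

lemma state_1: "state 1 w = (ternary (X1 w), 1, 1)"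
  unfolding state_def path_state_def path_sum_def by (simp add: sample_Inl)

lemma indep_first_step:
  "prob ({w\<in>space M. ternary (X1 w) = x} \<inter> {w\<in>space M. eta_ternary 2 w = e})
       = prob {w\<in>space M. ternary (X1 w) = x} * prob {w\<in>space M. eta_ternary 2 w = e}"
proof -
  define A :: "nat + nat \<Rightarrow> real set" where "A i = ternary -` {if i = Inl 1 then x else e}" for i
  have "A i \<in> sets borel" for i
    using borel_measurable_vimage[OF measurable_ternary] unfolding A_def by (simp add: vimage_def)
  then have "prob (\<Inter>i\<in>{Inl 1, Inl 2}. coord i -` A i \<inter> space M) = (\<Prod>i\<in>{Inl 1, Inl 2}. prob (coord i -` A i \<inter> space M))"
    by (intro indep_varsD[OF indep_coord]) (auto simp: coords_def)
  moreover have "coord (Inl 1) -` A (Inl 1) \<inter> space M = {w\<in>space M. ternary (X1 w) = x}"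
    "coord (Inl 2) -` A (Inl 2) \<inter> space M = {w\<in>space M. eta_ternary 2 w = e}"
    by (auto simp: coord_def A_def eta_ternary_def)
  ultimately show ?thesis by simp
qed

definition state_step :: "(real \<times> real \<times> real \<Rightarrow> 'c::real_vector) \<Rightarrow> real \<times> real \<times> real \<Rightarrow> 'c" where
  "state_step F v = (case v of (x,t,y) \<Rightarrow> (p/2) *\<^sub>R F (x,t+1,1) + (q/2) *\<^sub>R F (x,t-1,-1) + (r/2) *\<^sub>R F (x,t,0)
      + (p/2) *\<^sub>R F (x,t+y,y) + (q/2) *\<^sub>R F (x,t-y,-y) + (r/2) *\<^sub>R F (x,t,0))"

definition state_range :: "nat \<Rightarrow> (real \<times> real \<times> real) set" where
  "state_range n = {-1,0,1} \<times> (real_of_int ` {- int n..int n}) \<times> {-1,0,1}"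

definition state_range_1 :: "(real \<times> real \<times> real) set" where
  "state_range_1 = ({-1,0,1} \<times> {1} \<times> {1} :: (real \<times> real \<times> real) set)"

definition Estate :: "nat \<Rightarrow> (real \<times> real \<times> real \<Rightarrow> 'c::{banach,second_countable_topology}) \<Rightarrow> 'c" where
  "Estate n F = integral\<^sup>L M (\<lambda>w. F (state n w))"

lemma finite_state_range: "finite (state_range n)" unfolding state_range_def by auto

lemma finite_state_range_1: "finite state_range_1" unfolding state_range_1_def by auto

lemma state_in_range: "state n w \<in> state_range n"
proof -
  obtain i where i: "path_sum (sample w) n = of_int i" "- int n \<le> i" "i \<le> int n" using path_sum_int by blast
  show ?thesis unfolding state_def path_state_def state_range_def using ternary_range path_step_range i by auto
qed

lemma state_1_in_range: "state 1 w \<in> state_range_1" unfolding state_1 state_range_1_def using ternary_range by auto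

lemma Estate_sum: "1 \<le> n \<Longrightarrow> Estate n F = (\<Sum>v\<in>state_range n. prob {w\<in>space M. state n w = v} *\<^sub>R F v)"
  unfolding Estate_def by (rule integral_finite_range[OF finite_state_range state_in_range state_sets])

lemma Estate_1_sum: "Estate 1 F = (\<Sum>v\<in>state_range_1. prob {w\<in>space M. state 1 w = v} *\<^sub>R F v)"
  unfolding Estate_def by (rule integral_finite_range[OF finite_state_range_1 state_1_in_range state_sets]) simp

lemma eta_ternary_sets: "2 \<le> n \<Longrightarrow> {w\<in>space M. eta_ternary n w = e} \<in> events"
  unfolding eta_ternary_def using eta_meas[of n] by measurable

lemma copies_first_sets: assumes "3 \<le> n" shows "{w\<in>space M. copies_first n w = k} \<in> events"
proof (cases k)
  case True then show ?thesis using K_sets[OF assms] by (simp add: copies_first_def)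
next
  case False
  then have "{w\<in>space M. copies_first n w = k} = space M - {w\<in>space M. K n w = 1}" by (auto simp: copies_first_def)
  then show ?thesis using K_sets[OF assms] by auto
qed

lemma sum_ternary: "(\<Sum>e\<in>{1,-1,0::real}. f e) = f 1 + f (-1) + f 0"
  by (simp add: add.assoc)

lemma sum_halves_scaleR: "(a/2) *\<^sub>R A + (b/2) *\<^sub>R B + (c/2) *\<^sub>R C + (a/2) *\<^sub>R A + (b/2) *\<^sub>R B + (c/2) *\<^sub>R C
   = a *\<^sub>R A + b *\<^sub>R B + c *\<^sub>R (C::'c::real_vector)"
proof -
  have "a *\<^sub>R A + b *\<^sub>R B + c *\<^sub>R C = (a/2 + a/2) *\<^sub>R A + (b/2 + b/2) *\<^sub>R B + (c/2 + c/2) *\<^sub>R C" by simp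
  also have "\<dots> = (a/2) *\<^sub>R A + (b/2) *\<^sub>R B + (c/2) *\<^sub>R C + (a/2) *\<^sub>R A + (b/2) *\<^sub>R B + (c/2) *\<^sub>R C"
    by (simp only: scaleR_add_left add_ac)
  finally show ?thesis by simp
qed

lemma state_step_y1: "state_step F (x,t,1) = p *\<^sub>R F (x,t+1,1) + q *\<^sub>R F (x,t-1,-1) + r *\<^sub>R F (x,t,0)"
  unfolding state_step_def by (simp add: sum_halves_scaleR)

lemma prob_state_next:
  assumes n: "2 \<le> n"
  shows "prob {w\<in>space M. (state n w, eta_ternary (Suc n) w, copies_first (Suc n) w) = (v, e, k)}
       = prob {w\<in>space M. state n w = v} * step_prob e * (1/2)"
proof -
  have "{w\<in>space M. (state n w, eta_ternary (Suc n) w, copies_first (Suc n) w) = (v, e, k)}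
      = {w\<in>space M. state n w = v} \<inter> {w\<in>space M. eta_ternary (Suc n) w = e} \<inter> {w\<in>space M. copies_first (Suc n) w = k}"
    by auto
  then show ?thesis
    using n indep_state_step[OF n] prob_eta_ternary[of "Suc n" e] prob_copies_first[of "Suc n" k] by simp
qed

lemma sets_state_next:
  assumes n: "2 \<le> n"
  shows "{w\<in>space M. (state n w, eta_ternary (Suc n) w, copies_first (Suc n) w) = u} \<in> events"
proof -
  obtain v e k where u: "u = (v, e, k)" by (cases u) auto
  have "{w\<in>space M. (state n w, eta_ternary (Suc n) w, copies_first (Suc n) w) = u}
      = {w\<in>space M. state n w = v} \<inter> {w\<in>space M. eta_ternary (Suc n) w = e} \<inter> {w\<in>space M. copies_first (Suc n) w = k}"
    unfolding u by auto
  then show ?thesis using n state_sets[of n] eta_ternary_sets[of "Suc n"] copies_first_sets[of "Suc n"] by auto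
qed

lemma Estate_Suc_ge2:
  fixes F :: "real \<times> real \<times> real \<Rightarrow> 'c::{banach,second_countable_topology}"
  assumes n: "2 \<le> n"
  shows "Estate (Suc n) F = Estate n (state_step F)"
proof -
  define \<Gamma> :: "(real \<times> real \<times> real) \<times> real \<times> bool \<Rightarrow> real \<times> real \<times> real" where
    "\<Gamma> u = (case u of ((x, t, y), e, k) \<Rightarrow> (x, t + e * (if k then 1 else y), e * (if k then 1 else y)))" for u
  define W where "W w = (state n w, eta_ternary (Suc n) w, copies_first (Suc n) w)" for w
  define S where "S = state_range n \<times> {1,-1,0::real} \<times> (UNIV :: bool set)"
  have "state (Suc n) w = \<Gamma> (W w)" for w
    using n by (cases "copies_first (Suc n) w")
      (auto simp: \<Gamma>_def W_def state_def path_state_def path_sum_Suc sample_Inl sample_Inr eta_ternary_def copies_first_def)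
  then have "Estate (Suc n) F = integral\<^sup>L M (\<lambda>w. (F \<circ> \<Gamma>) (W w))" unfolding Estate_def by simp
  also have "\<dots> = (\<Sum>u\<in>S. prob {w\<in>space M. W w = u} *\<^sub>R (F \<circ> \<Gamma>) u)"
  proof (rule integral_finite_range)
    show "W w \<in> S" for w
      unfolding W_def S_def eta_ternary_def using state_in_range ternary_range by auto
    show "{w\<in>space M. W w = u} \<in> events" for u
      unfolding W_def by (rule sets_state_next[OF n])
  qed (simp add: S_def finite_state_range)
  also have "\<dots> = (\<Sum>v\<in>state_range n. prob {w\<in>space M. state n w = v} *\<^sub>R state_step F v)"
    unfolding S_def sum.cartesian_product' W_def prob_state_next[OF n]
    by (intro sum.cong refl)
      (simp add: sum_ternary UNIV_bool \<Gamma>_def state_step_def step_prob_def algebra_simps split: prod.split)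
  also have "\<dots> = Estate n (state_step F)" using n by (simp add: Estate_sum)
  finally show ?thesis .
qed

lemma prob_state_1_next:
  assumes "v \<in> state_range_1"
  shows "prob {w\<in>space M. (state 1 w, eta_ternary 2 w) = (v, e)} = prob {w\<in>space M. state 1 w = v} * step_prob e"
proof -
  obtain x where v: "v = (x, 1, 1)" using assms unfolding state_range_1_def by auto
  have "{w\<in>space M. (state 1 w, eta_ternary 2 w) = (v, e)}
      = {w\<in>space M. ternary (X1 w) = x} \<inter> {w\<in>space M. eta_ternary 2 w = e}"
    "{w\<in>space M. state 1 w = v} = {w\<in>space M. ternary (X1 w) = x}"
    unfolding v state_1 by auto
  then show ?thesis using indep_first_step prob_eta_ternary[of 2 e] by simp
qed

lemma Estate_2:
  fixes F :: "real \<times> real \<times> real \<Rightarrow> 'c::{banach,second_countable_topology}"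
  shows "Estate 2 F = Estate 1 (state_step F)"
proof -
  define \<Gamma> :: "(real \<times> real \<times> real) \<times> real \<Rightarrow> real \<times> real \<times> real" where
    "\<Gamma> u = (case u of ((x, t, y), e) \<Rightarrow> (x, t + e, e))" for u
  define W where "W w = (state 1 w, eta_ternary 2 w)" for w
  define S where "S = state_range_1 \<times> {1,-1,0::real}"
  have "state 2 w = \<Gamma> (W w)" for w
    by (simp add: \<Gamma>_def W_def state_1 eta_ternary_def)
      (simp add: state_def path_state_def path_sum_def sample_Inl numeral_2_eq_2)
  then have "Estate 2 F = integral\<^sup>L M (\<lambda>w. (F \<circ> \<Gamma>) (W w))" unfolding Estate_def by simp
  also have "\<dots> = (\<Sum>u\<in>S. prob {w\<in>space M. W w = u} *\<^sub>R (F \<circ> \<Gamma>) u)"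
  proof (rule integral_finite_range)
    show "W w \<in> S" for w
      unfolding W_def S_def eta_ternary_def using state_1_in_range ternary_range by auto
    show "{w\<in>space M. W w = u} \<in> events" for u
      using state_sets[of 1 "fst u"] eta_ternary_sets[of 2 "snd u"] unfolding W_def
      by (cases u) (auto simp: Int_def conj_commute)
  qed (simp add: S_def finite_state_range_1)
  also have "\<dots> = (\<Sum>v\<in>state_range_1. prob {w\<in>space M. state 1 w = v} *\<^sub>R state_step F v)"
    unfolding S_def sum.cartesian_product' W_def
  proof (intro sum.cong refl)
    fix v assume v: "v \<in> state_range_1"
    then obtain x where "v = (x, 1, 1)" unfolding state_range_1_def by auto
    then show "(\<Sum>e\<in>{1,-1,0}. prob {w\<in>space M. (state 1 w, eta_ternary 2 w) = (v, e)} *\<^sub>R (F \<circ> \<Gamma>) (v, e))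
        = prob {w\<in>space M. state 1 w = v} *\<^sub>R state_step F v"
      unfolding prob_state_1_next[OF v] sum_ternary
      by (simp add: state_step_y1 \<Gamma>_def step_prob_def scaleR_add_right algebra_simps)
  qed
  also have "\<dots> = Estate 1 (state_step F)" by (rule Estate_1_sum[symmetric])
  finally show ?thesis .
qed

lemma Estate_Suc: "1 \<le> n \<Longrightarrow> Estate (Suc n) F = Estate n (state_step F)"
  using Estate_2[of F] Estate_Suc_ge2[of n F] by (cases "n = 1") (auto simp: numeral_2_eq_2)

lemma Estate_1: "Estate 1 F = p *\<^sub>R F (1,1,1) + q *\<^sub>R F (-1,1,1) + r *\<^sub>R F (0,1,1)"
proof -
  have S: "state_range_1 = (\<lambda>x. (x,1,1)) ` {1,-1,0}" unfolding state_range_1_def by auto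
  have inj: "inj_on (\<lambda>x::real. (x,1::real,1::real)) {1,-1,0}" by (auto simp: inj_on_def)
  have P: "prob {w\<in>space M. state 1 w = (x,1,1)} = step_prob x" for x
  proof -
    have "{w\<in>space M. state 1 w = (x,1,1)} = {w\<in>space M. ternary (X1 w) = x}" unfolding state_1 by auto
    then show ?thesis using prob_ternary_X1 by simp
  qed
  show ?thesis unfolding Estate_1_sum S sum.reindex[OF inj] comp_def P sum_ternary
    by (simp add: step_prob_def add.assoc)
qed

lemma sum_prob_state: "1 \<le> n \<Longrightarrow> (\<Sum>v\<in>state_range n. prob {w\<in>space M. state n w = v}) = 1"
  using Estate_sum[of n "\<lambda>_. 1::real"] by (simp add: Estate_def prob_space)

lemma norm_Estate_le:
  fixes F :: "real \<times> real \<times> real \<Rightarrow> 'c::{banach,second_countable_topology}"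
  assumes n: "1 \<le> n" and B: "\<And>x t y. \<bar>y\<bar> \<le> 1 \<Longrightarrow> norm (F (x,t,y)) \<le> B"
  shows "norm (Estate n F) \<le> B"
proof -
  have "norm (Estate n F) \<le> (\<Sum>v\<in>state_range n. norm (prob {w\<in>space M. state n w = v} *\<^sub>R F v))"
    unfolding Estate_sum[OF n] by (rule norm_sum)
  also have "\<dots> \<le> (\<Sum>v\<in>state_range n. prob {w\<in>space M. state n w = v} * B)"
  proof (intro sum_mono)
    fix v assume "v \<in> state_range n"
    then obtain x t y where v: "v = (x,t,y)" "\<bar>y\<bar> \<le> 1" unfolding state_range_def by auto
    show "norm (prob {w\<in>space M. state n w = v} *\<^sub>R F v) \<le> prob {w\<in>space M. state n w = v} * B"
      using B[OF v(2), of x t] unfolding v(1) by (simp add: mult_left_mono)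
  qed
  also have "\<dots> = B" using sum_prob_state[OF n] by (simp add: sum_distrib_right[symmetric])
  finally show ?thesis .
qed

lemma Estate_add: "1 \<le> n \<Longrightarrow> Estate n (\<lambda>v. F v + G v) = Estate n F + Estate n G"
  by (simp add: Estate_sum scaleR_add_right sum.distrib)

lemma Estate_diff: "1 \<le> n \<Longrightarrow> Estate n (\<lambda>v. F v - G v) = Estate n F - Estate n G"
  by (simp add: Estate_sum scaleR_diff_right sum_subtractf)

lemma Estate_scaleR: "1 \<le> n \<Longrightarrow> Estate n (\<lambda>v. c *\<^sub>R F v) = c *\<^sub>R Estate n F"
  by (simp add: Estate_sum scaleR_sum_right mult.commute)

lemma Estate_mult: "1 \<le> n \<Longrightarrow> Estate n (\<lambda>v. (c::real) * F v) = c * Estate n F"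
  using Estate_scaleR[of n c F] by simp

lemma Estate_const: "1 \<le> n \<Longrightarrow> Estate n (\<lambda>v. c) = c"
  using sum_prob_state by (simp add: Estate_sum scaleR_sum_left[symmetric])

lemma Estate_iterate: "Estate (Suc k) F = Estate 1 ((state_step ^^ k) F)"
proof (induction k arbitrary: F)
  case 0 then show ?case by simp
next
  case (Suc k)
  have "Estate (Suc (Suc k)) F = Estate (Suc k) (state_step F)" by (rule Estate_Suc) simp
  also have "\<dots> = Estate 1 ((state_step ^^ k) (state_step F))" by (rule Suc.IH)
  also have "\<dots> = Estate 1 ((state_step ^^ Suc k) F)" by (simp add: funpow_swap1)
  finally show ?case .
qed

definition with_first :: "real \<Rightarrow> (real \<times> real \<times> real \<Rightarrow> 'c) \<Rightarrow> real \<times> real \<times> real \<Rightarrow> 'c" where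
  "with_first x0 F = (\<lambda>(x::real,t::real,y::real). F (x0,t,y))"

lemma state_step_with_first: "state_step (with_first x0 F) = with_first x0 (state_step F)"
  by (auto simp: fun_eq_iff with_first_def state_step_def)

lemma iterate_with_first: "(state_step ^^ k) (with_first x0 F) = with_first x0 ((state_step ^^ k) F)"
  by (induction k) (simp_all add: state_step_with_first)

lemma Estate_1_with_first: "Estate 1 (with_first x0 F) = F (x0,1,1)"
proof -
  have "Estate 1 (with_first x0 F) = (p + q + r) *\<^sub>R F (x0,1,1)"
    unfolding Estate_1 by (simp add: with_first_def scaleR_add_left)
  then show ?thesis using pqr_sum by simp
qed

text \<open>\<open>state_step\<close> never changes the first coordinate, so iterating it down to \<open>n = 1\<close> leaves
  only the law of \<open>ternary X\<^sub>1\<close>.\<close>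

lemma Estate_split_first:
  assumes n: "1 \<le> n"
  shows "Estate n F = p *\<^sub>R Estate n (with_first 1 F) + q *\<^sub>R Estate n (with_first (-1) F)
    + r *\<^sub>R Estate n (with_first 0 F)"
proof -
  obtain k where k: "n = Suc k" using n by (cases n) auto
  show ?thesis unfolding k Estate_iterate iterate_with_first Estate_1_with_first unfolding Estate_1 ..
qed

definition centre :: "nat \<Rightarrow> (real \<Rightarrow> real \<Rightarrow> 'c) \<Rightarrow> real \<times> real \<times> real \<Rightarrow> 'c" where
  "centre n G = (\<lambda>(x,t,y). G (t - real n * mean_Y) y)"

definition Ecen :: "nat \<Rightarrow> (real \<Rightarrow> real \<Rightarrow> 'c::{banach,second_countable_topology}) \<Rightarrow> 'c" where
  "Ecen n G = Estate n (centre n G)"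

lemma state_step_centre: "state_step (centre (Suc n) G) = centre n (cstep G)"
proof (rule ext)
  fix v :: "real \<times> real \<times> real"
  obtain x t y where v: "v = (x,t,y)" by (cases v) auto
  have e: "t + 1 - real (Suc n) * mean_Y = (t - real n * mean_Y) + 1 - mean_Y"
    "t - 1 - real (Suc n) * mean_Y = (t - real n * mean_Y) - 1 - mean_Y"
    "t - real (Suc n) * mean_Y = (t - real n * mean_Y) - mean_Y"
    "t + y - real (Suc n) * mean_Y = (t - real n * mean_Y) + y - mean_Y"
    "t - y - real (Suc n) * mean_Y = (t - real n * mean_Y) - y - mean_Y"
    by (simp_all add: algebra_simps)
  show "state_step (centre (Suc n) G) v = centre n (cstep G) v"
    unfolding v state_step_def centre_def centred_step_def by (simp only: prod.case e)
qed

lemma Ecen_Suc: "1 \<le> n \<Longrightarrow> Ecen (Suc n) G = Ecen n (cstep G)"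
  unfolding Ecen_def by (simp add: Estate_Suc state_step_centre)

lemma Ecen_1: "Ecen 1 G = G (1 - mean_Y) 1"
proof -
  have "Ecen 1 G = (p + q + r) *\<^sub>R G (1 - mean_Y) 1" unfolding Ecen_def Estate_1
    by (simp add: centre_def scaleR_add_left)
  then show ?thesis using pqr_sum by simp
qed

lemma centre_add: "centre n (\<lambda>d y. G d y + H d y) = (\<lambda>v. centre n G v + centre n H v)"
  by (auto simp: fun_eq_iff centre_def)

lemma centre_diff: "centre n (\<lambda>d y. G d y - H d y) = (\<lambda>v. centre n G v - centre n H v)"
  by (auto simp: fun_eq_iff centre_def)

lemma centre_mult: "centre n (\<lambda>d y. (c::real) * G d y) = (\<lambda>v. c * centre n G v)"
  by (auto simp: fun_eq_iff centre_def)

lemma centre_const: "centre n (\<lambda>d y. c) = (\<lambda>v. c)"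
  by (auto simp: fun_eq_iff centre_def)

lemma Ecen_add: "1 \<le> n \<Longrightarrow> Ecen n (\<lambda>d y. G d y + H d y) = Ecen n G + Ecen n H"
  unfolding Ecen_def centre_add by (rule Estate_add)

lemma Ecen_diff: "1 \<le> n \<Longrightarrow> Ecen n (\<lambda>d y. G d y - H d y) = Ecen n G - Ecen n H"
  unfolding Ecen_def centre_diff by (rule Estate_diff)

lemma Ecen_mult: "1 \<le> n \<Longrightarrow> Ecen n (\<lambda>d y. (c::real) * G d y) = c * Ecen n G"
  unfolding Ecen_def centre_mult by (rule Estate_mult)

lemma Ecen_const: "1 \<le> n \<Longrightarrow> Ecen n (\<lambda>d y. c) = c"
  unfolding Ecen_def centre_const by (rule Estate_const)

lemma norm_Ecen_le:
  fixes G :: "real \<Rightarrow> real \<Rightarrow> 'c::{banach,second_countable_topology}"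
  assumes "1 \<le> n" "\<And>d y. \<bar>y\<bar> \<le> 1 \<Longrightarrow> norm (G d y) \<le> B"
  shows "norm (Ecen n G) \<le> B"
  unfolding Ecen_def using assms by (intro norm_Estate_le) (auto simp: centre_def)

end

section \<open>Moments of the walk started from 1\<close>

context erw_prob
begin

definition T :: "nat \<Rightarrow> 'a \<Rightarrow> real" where "T n w = path_sum (sample w) n"

lemma measurable_T[measurable]: "T n \<in> borel_measurable M"
proof -
  have "T n = (\<lambda>w. path_sum (restrict (sample w) (path_coords n)) n)"
    unfolding T_def by (auto simp: fun_eq_iff intro!: path_sum_local)
  also have "\<dots> \<in> borel_measurable M"
    by (rule measurable_compose[OF measurable_restrict_sample[OF path_coords_subset] measurable_path_sum[OF order.refl]])
  finally show ?thesis .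
qed

lemma state_eq: "state n w = (ternary (X1 w), T n w, path_step (sample w) n)"
  unfolding T_def state_def path_state_def by (simp add: sample_Inl)

lemma integral_T: "integral\<^sup>L M (\<lambda>w. G (T n w)) = Estate n (\<lambda>(x,t,y). G t)"
  unfolding Estate_def state_eq by simp

lemma Ecen_scaleR: "1 \<le> n \<Longrightarrow> Ecen n (\<lambda>d y. c *\<^sub>R G d y) = c *\<^sub>R Ecen n G"
proof -
  assume n: "1 \<le> n"
  have "centre n (\<lambda>d y. c *\<^sub>R G d y) = (\<lambda>v. c *\<^sub>R centre n G v)" by (auto simp: fun_eq_iff centre_def)
  then show ?thesis unfolding Ecen_def using Estate_scaleR[OF n] by simp
qed

lemma Ecen_linear: "1 \<le> n \<Longrightarrow> Ecen n (\<lambda>d y. d + mean_Y * y) = 1"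
proof (induction n rule: dec_induct)
  case base then show ?case by (simp add: Ecen_1[unfolded One_nat_def])
next
  case (step n)
  have "cstep (\<lambda>d y. d + mean_Y * y) = (\<lambda>d y. d + mean_Y * y)" by (simp add: fun_eq_iff cstep_linear)
  then show ?case using step by (simp add: Ecen_Suc)
qed

lemma Ecen_qpot: "1 \<le> n \<Longrightarrow> Ecen n qpot = qpot (1 - mean_Y) 1 + (real n - 1) * sigma2"
proof (induction n rule: dec_induct)
  case base then show ?case by (simp add: Ecen_1[unfolded One_nat_def])
next
  case (step n)
  have "cstep qpot = (\<lambda>d y. qpot d y + sigma2)" by (simp add: fun_eq_iff cstep_qpot)
  then have "Ecen (Suc n) qpot = Ecen n (\<lambda>d y. qpot d y + sigma2)"
    using step(1) by (simp add: Ecen_Suc)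
  also have "\<dots> = Ecen n qpot + sigma2" using step(1) by (simp add: Ecen_add Ecen_const)
  finally show ?case using step by (simp add: algebra_simps)
qed

text \<open>The cross moment stays bounded because \<open>cstep\<close> contracts it by the factor \<open>(p - q)/2\<close>.\<close>

lemma abs_Ecen_cross_le: "1 \<le> n \<Longrightarrow> \<bar>Ecen n (\<lambda>d y. d * (y - mean_Y))\<bar> \<le> 8"
proof (induction n rule: dec_induct)
  case base
  have "\<bar>1 - mean_Y\<bar> \<le> 2" using abs_mean_Y_less by simp
  then have "\<bar>1 - mean_Y\<bar> * \<bar>1 - mean_Y\<bar> \<le> 2 * 2" by (intro mult_mono) auto
  then show ?case by (simp add: Ecen_1[unfolded One_nat_def] abs_mult)
next
  case (step n)
  define R where "R y = cstep (\<lambda>d y. (y - mean_Y)^2) 0 y" for y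
  have "cstep (\<lambda>d y. d * (y - mean_Y)) = (\<lambda>d y. (p - q)/2 * (d * (y - mean_Y)) + R y)"
    unfolding R_def by (simp add: fun_eq_iff cstep_cross)
  then have "Ecen (Suc n) (\<lambda>d y. d * (y - mean_Y)) = Ecen n (\<lambda>d y. (p - q)/2 * (d * (y - mean_Y)) + R y)"
    using step(1) by (simp add: Ecen_Suc)
  also have "\<dots> = (p - q)/2 * Ecen n (\<lambda>d y. d * (y - mean_Y)) + Ecen n (\<lambda>d y. R y)"
    by (simp only: Ecen_add[OF step(1)] Ecen_mult[OF step(1)])
  finally have eq: "Ecen (Suc n) (\<lambda>d y. d * (y - mean_Y)) = \<dots>" .
  have "\<bar>R y\<bar> \<le> 4" if "\<bar>y\<bar> \<le> 1" for y
  proof -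
    have "norm ((y' - mean_Y)^2) \<le> 4" if "\<bar>y'\<bar> \<le> 1" for y'
    proof -
      have "\<bar>y' - mean_Y\<bar> \<le> 2" using that abs_mean_Y_less by simp
      then show ?thesis using abs_le_square_iff[of "y' - mean_Y" 2] by simp
    qed
    then have "norm (cstep (\<lambda>d y. (y - mean_Y)^2) 0 y) \<le> 4" by (intro norm_cstep_le[OF _ that])
    then show ?thesis unfolding R_def by simp
  qed
  then have "\<bar>Ecen n (\<lambda>d y. R y)\<bar> \<le> 4" using norm_Ecen_le[of n "\<lambda>d y. R y" 4] step(1) by simp
  moreover have "\<bar>(p - q)/2 * Ecen n (\<lambda>d y. d * (y - mean_Y))\<bar> \<le> 1/2 * 8"
    unfolding abs_mult using p_pos q_pos p_less_1 q_less_1 step.IH by (intro mult_mono) auto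
  ultimately show ?case unfolding eq by simp
qed

lemma abs_Ecen_d_le: "1 \<le> n \<Longrightarrow> \<bar>Ecen n (\<lambda>d y. d)\<bar> \<le> 2"
proof -
  assume n: "1 \<le> n"
  have "Ecen n (\<lambda>d y. d) = Ecen n (\<lambda>d y. (d + mean_Y * y) - mean_Y * y)" by simp
  also have "\<dots> = 1 - mean_Y * Ecen n (\<lambda>d y. y)" using n by (simp only: Ecen_diff Ecen_mult Ecen_linear)
  finally have eq: "Ecen n (\<lambda>d y. d) = 1 - mean_Y * Ecen n (\<lambda>d y. y)" .
  have "\<bar>Ecen n (\<lambda>d y. y)\<bar> \<le> 1" using norm_Ecen_le[of n "\<lambda>d y. y" 1] n by simp
  then have "\<bar>mean_Y * Ecen n (\<lambda>d y. y)\<bar> \<le> 1"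
    using abs_mean_Y_less by (simp add: abs_mult mult_le_one)
  then show ?thesis unfolding eq by simp
qed

lemma variance_T_eq:
  assumes n: "1 \<le> n"
  shows "variance (T n) = Ecen n (\<lambda>d y. d^2) - (Ecen n (\<lambda>d y. d))^2"
proof -
  define \<delta> where "\<delta> = Ecen n (\<lambda>d y. d)"
  have "expectation (T n) = Estate n (\<lambda>v. centre n (\<lambda>d y. d) v + real n * mean_Y)"
    using integral_T[of "\<lambda>t. t" n] by (simp add: centre_def case_prod_beta')
  then have mean: "expectation (T n) = \<delta> + real n * mean_Y"
    unfolding \<delta>_def Ecen_def using n by (simp add: Estate_add Estate_const)
  have "variance (T n) = Estate n (\<lambda>(x,t,y). (t - (\<delta> + real n * mean_Y))^2)"
    using integral_T[of "\<lambda>t. (t - (\<delta> + real n * mean_Y))^2" n] unfolding mean by simp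
  also have "\<dots> = Estate n (centre n (\<lambda>d y. d^2 - 2 * \<delta> * d + \<delta>^2))"
    by (intro arg_cong[where f="Estate n"]) (auto simp: fun_eq_iff centre_def power2_eq_square algebra_simps)
  also have "\<dots> = Ecen n (\<lambda>d y. d^2) - 2 * \<delta> * \<delta> + \<delta>^2"
    unfolding Ecen_def[symmetric] using n by (simp add: Ecen_add Ecen_diff Ecen_mult Ecen_const \<delta>_def)
  finally show ?thesis unfolding \<delta>_def by (simp add: power2_eq_square)
qed

lemma abs_variance_T_sub_le:
  assumes n: "1 \<le> n"
  shows "\<bar>variance (T n) - real n * sigma2\<bar> \<le> \<bar>qpot (1 - mean_Y) 1\<bar> + sigma2 + 24 + 2 * corr_bound"
proof -
  define e where "e = Ecen n (\<lambda>d y. d)"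
  define c where "c = Ecen n (\<lambda>d y. d * (y - mean_Y))"
  define k where "k = Ecen n (\<lambda>d y. corr y)"
  have "Ecen n (\<lambda>d y. d^2) = Ecen n (\<lambda>d y. qpot d y - 2 * mean_Y * (d * (y - mean_Y)) - 2 * mean_Y^2 * d + 2 * corr y)"
    by (rule arg_cong[where f="Ecen n"]) (auto simp: fun_eq_iff qpot_def power2_eq_square algebra_simps)
  also have "\<dots> = Ecen n qpot - 2 * mean_Y * c - 2 * mean_Y^2 * e + 2 * k"
    using n by (simp only: Ecen_add Ecen_diff Ecen_mult c_def e_def k_def)
  finally have "variance (T n) - real n * sigma2
      = qpot (1 - mean_Y) 1 - sigma2 - 2 * mean_Y * c - 2 * mean_Y^2 * e + 2 * k - e^2"
    unfolding variance_T_eq[OF n] Ecen_qpot[OF n] e_def[symmetric] by (simp add: algebra_simps)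
  moreover have "\<bar>mean_Y * c\<bar> \<le> 8"
    using mult_mono[OF _ abs_Ecen_cross_le[OF n], of "\<bar>mean_Y\<bar>" 1] abs_mean_Y_less unfolding c_def
      by (simp add: abs_mult)
  moreover have "\<bar>mean_Y^2 * e\<bar> \<le> 2"
    using mult_mono[OF _ abs_Ecen_d_le[OF n], of "mean_Y^2" 1] abs_mean_Y_less unfolding e_def
    by (simp add: abs_mult abs_square_le_1)
  moreover have "0 \<le> e^2" by simp
  moreover have "e^2 \<le> 4" using abs_Ecen_d_le[OF n] abs_le_square_iff[of e 2] unfolding e_def by simp
  moreover have "\<bar>k\<bar> \<le> corr_bound" using norm_Ecen_le[of n "\<lambda>d y. corr y"] n abs_corr_le unfolding k_def by simp
  moreover have "\<bar>qpot (1 - mean_Y) 1\<bar> \<ge> qpot (1 - mean_Y) 1" "\<bar>qpot (1 - mean_Y) 1\<bar> \<ge> - qpot (1 - mean_Y) 1"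
    by simp_all
  ultimately show ?thesis using sigma2_pos by (simp only: abs_le_iff) linarith
qed

lemma variance_T_limit: "(\<lambda>n. variance (T n) / real n) \<longlonglongrightarrow> sigma2"
proof -
  define C where "C = \<bar>qpot (1 - mean_Y) 1\<bar> + sigma2 + 24 + 2 * corr_bound"
  have "\<forall>\<^sub>F n in sequentially. \<bar>variance (T n) / real n - sigma2\<bar> \<le> C / real n"
    using eventually_ge_at_top[of 1]
  proof eventually_elim
    case (elim n)
    then have "\<bar>variance (T n) / real n - sigma2\<bar> = \<bar>variance (T n) - real n * sigma2\<bar> / real n"
      by (simp add: field_simps)
    also have "\<dots> \<le> C / real n" unfolding C_def using abs_variance_T_sub_le[OF elim] by (intro divide_right_mono) auto
    finally show ?case .
  qed
  then have "(\<lambda>n. variance (T n) / real n - sigma2) \<longlonglongrightarrow> 0"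
    by (intro Lim_null_comparison[OF _ lim_const_over_n]) simp
  then show ?thesis by (simp add: LIM_zero_iff)
qed

end

section \<open>Characteristic function of the centred position\<close>

lemma tendsto_exp_limit_sequentially_pred: "(\<lambda>n. (1 + x / real n) ^ (n - 1)) \<longlonglongrightarrow> exp x"
proof -
  have base: "(\<lambda>n. 1 + x / real n) \<longlonglongrightarrow> 1" by real_asymp
  then have "\<forall>\<^sub>F n in sequentially. 0 < 1 + x / real n" by (intro order_tendstoD) auto
  then have "\<forall>\<^sub>F n in sequentially. (1 + x / real n) ^ n / (1 + x / real n) = (1 + x / real n) ^ (n - 1)"
    using eventually_ge_at_top[of 1]
  proof eventually_elim
    case (elim n)
    then obtain k where "n = Suc k" by (cases n) auto
    then show ?case using elim by simp
  qed
  moreover have "(\<lambda>n. (1 + x / real n) ^ n / (1 + x / real n)) \<longlonglongrightarrow> exp x / 1"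
    by (intro tendsto_divide tendsto_exp_limit_sequentially base) simp
  ultimately show ?thesis by (simp add: Lim_transform_eventually)
qed

context erw_prob
begin

definition Phi :: "nat \<Rightarrow> real \<Rightarrow> complex" where
  "Phi n s = Ecen n (\<lambda>d y. iexp (s * d) * char_corr s y)"

lemma norm_Phi_Suc_sub_le:
  assumes n: "1 \<le> n" and s: "\<bar>s\<bar> \<le> 1"
  shows "norm (Phi (Suc n) s - char_factor s *\<^sub>R Phi n s) \<le> char_err * \<bar>s\<bar>^3"
proof -
  define B where "B y = cstep (\<lambda>d y'. iexp (s * d) * char_corr s y') 0 y" for y
  have "cstep (\<lambda>d y. iexp (s * d) * char_corr s y) = (\<lambda>d y. iexp (s * d) * B y)"
    unfolding B_def by (intro ext centred_step_iexp)
  then have "Phi (Suc n) s - char_factor s *\<^sub>R Phi n s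
      = Ecen n (\<lambda>d y. iexp (s * d) * B y - char_factor s *\<^sub>R (iexp (s * d) * char_corr s y))"
    unfolding Phi_def Ecen_Suc[OF n] Ecen_diff[OF n] Ecen_scaleR[OF n] by simp
  also have "norm \<dots> \<le> char_err * \<bar>s\<bar>^3"
  proof (rule norm_Ecen_le[OF n])
    fix d y :: real assume y: "\<bar>y\<bar> \<le> 1"
    have "iexp (s * d) * B y - char_factor s *\<^sub>R (iexp (s * d) * char_corr s y)
        = iexp (s * d) * (B y - complex_of_real (char_factor s) * char_corr s y)"
      by (simp add: scaleR_conv_of_real algebra_simps)
    then show "norm (iexp (s * d) * B y - char_factor s *\<^sub>R (iexp (s * d) * char_corr s y)) \<le> char_err * \<bar>s\<bar>^3"
      using cstep_char_corr[OF s y] unfolding B_def by (simp add: norm_mult)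
  qed
  finally show ?thesis .
qed

lemma norm_Phi_sub_power_le:
  assumes n: "1 \<le> n" and s: "\<bar>s\<bar> \<le> 1" and factor: "\<bar>char_factor s\<bar> \<le> 1"
  shows "norm (Phi n s - char_factor s ^ (n - 1) *\<^sub>R Phi 1 s) \<le> (real n - 1) * char_err * \<bar>s\<bar>^3"
  using n
proof (induction n rule: dec_induct)
  case base then show ?case by simp
next
  case (step n)
  have "Phi (Suc n) s - char_factor s ^ (Suc n - 1) *\<^sub>R Phi 1 s
      = (Phi (Suc n) s - char_factor s *\<^sub>R Phi n s) + char_factor s *\<^sub>R (Phi n s - char_factor s ^ (n - 1) *\<^sub>R Phi 1 s)"
    using step(1) by (cases n) (simp_all add: algebra_simps)
  also have "norm \<dots> \<le> char_err * \<bar>s\<bar>^3 + 1 * ((real n - 1) * char_err * \<bar>s\<bar>^3)"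
  proof (rule order.trans[OF norm_triangle_ineq add_mono])
    show "norm (Phi (Suc n) s - char_factor s *\<^sub>R Phi n s) \<le> char_err * \<bar>s\<bar>^3"
      by (rule norm_Phi_Suc_sub_le[OF step(1) s])
    show "norm (char_factor s *\<^sub>R (Phi n s - char_factor s ^ (n - 1) *\<^sub>R Phi 1 s)) \<le> 1 * ((real n - 1) * char_err * \<bar>s\<bar>^3)"
      unfolding norm_scaleR by (rule mult_mono[OF factor step.IH]) auto
  qed
  finally show ?case by (simp add: algebra_simps)
qed

lemma norm_Ecen_iexp_sub_Phi_le:
  assumes n: "1 \<le> n"
  shows "norm (Ecen n (\<lambda>d y. iexp (s * d)) - Phi n s) \<le> \<bar>s\<bar> + s^2 * corr_bound"
proof -
  have "Ecen n (\<lambda>d y. iexp (s * d)) - Phi n s = Ecen n (\<lambda>d y. iexp (s * d) * (1 - char_corr s y))"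
    unfolding Phi_def Ecen_diff[OF n, symmetric] by (simp add: algebra_simps)
  also have "norm \<dots> \<le> \<bar>s\<bar> + s^2 * corr_bound"
    using norm_char_corr_sub_1_le by (intro norm_Ecen_le[OF n]) (simp add: norm_mult norm_minus_commute)
  finally show ?thesis .
qed

lemma char_factor_power_limit:
  "(\<lambda>n. char_factor (\<theta> / sqrt (real n)) ^ (n - 1)) \<longlonglongrightarrow> exp (- sigma2 * \<theta>^2 / 2)"
proof -
  have "\<forall>\<^sub>F n in sequentially. (1 + (- sigma2 * \<theta>^2 / 2) / real n) ^ (n - 1) = char_factor (\<theta> / sqrt (real n)) ^ (n - 1)"
    using eventually_ge_at_top[of 1] by eventually_elim (simp add: char_factor_def power_divide mult.commute)
  with tendsto_exp_limit_sequentially_pred show ?thesis by (rule Lim_transform_eventually)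
qed

lemma Phi_1_limit: "(\<lambda>n. Phi 1 (\<theta> / sqrt (real n))) \<longlonglongrightarrow> 1"
proof -
  have s: "(\<lambda>n. \<theta> / sqrt (real n)) \<longlonglongrightarrow> 0" by real_asymp
  have "(\<lambda>n. iexp (\<theta> / sqrt (real n) * (1 - mean_Y)) * char_corr (\<theta> / sqrt (real n)) 1)
      \<longlonglongrightarrow> iexp (0 * (1 - mean_Y)) * (1 + \<i> * complex_of_real (0 * (mean_Y * 1)) + complex_of_real (0^2 * corr 1))"
    unfolding char_corr_def by (intro tendsto_intros s)
  then show ?thesis unfolding Phi_def Ecen_1 by simp
qed

lemma char_err_nonneg: "0 \<le> char_err"
  unfolding char_err_def using corr_bound_nonneg sigma2_pos by simp

lemma Ecen_iexp_approx_limit: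
  assumes s0: "s \<longlonglongrightarrow> 0" and s3: "(\<lambda>n. real n * \<bar>s n\<bar>^3) \<longlonglongrightarrow> 0"
  shows "(\<lambda>n. Ecen n (\<lambda>d y. iexp (s n * d)) - complex_of_real (char_factor (s n) ^ (n - 1)) * Phi 1 (s n)) \<longlonglongrightarrow> 0"
proof (rule Lim_null_comparison)
  have abs0: "(\<lambda>n. \<bar>s n\<bar>) \<longlonglongrightarrow> 0" using tendsto_rabs[OF s0] by simp
  then have "\<forall>\<^sub>F n in sequentially. \<bar>s n\<bar> < 1" by (rule order_tendstoD) simp
  moreover have "(\<lambda>n. sigma2 * (s n)^2) \<longlonglongrightarrow> sigma2 * 0^2" by (intro tendsto_intros s0)
  then have "\<forall>\<^sub>F n in sequentially. sigma2 * (s n)^2 < 2" by (rule order_tendstoD) simp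
  ultimately show "\<forall>\<^sub>F n in sequentially.
      norm (Ecen n (\<lambda>d y. iexp (s n * d)) - complex_of_real (char_factor (s n) ^ (n - 1)) * Phi 1 (s n))
      \<le> char_err * (real n * \<bar>s n\<bar>^3) + (\<bar>s n\<bar> + (s n)^2 * corr_bound)"
    using eventually_ge_at_top[of 1]
  proof eventually_elim
    case (elim n)
    have factor: "\<bar>char_factor (s n)\<bar> \<le> 1" using elim(2) sigma2_pos unfolding char_factor_def
      by (simp add: abs_le_iff)
    have "norm (Ecen n (\<lambda>d y. iexp (s n * d)) - complex_of_real (char_factor (s n) ^ (n - 1)) * Phi 1 (s n))
        \<le> norm (Ecen n (\<lambda>d y. iexp (s n * d)) - Phi n (s n))
          + norm (Phi n (s n) - char_factor (s n) ^ (n - 1) *\<^sub>R Phi 1 (s n))"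
      by (rule order.trans[OF _ norm_triangle_ineq]) (simp add: scaleR_conv_of_real)
    also have "\<dots> \<le> (\<bar>s n\<bar> + (s n)^2 * corr_bound) + (real n - 1) * char_err * \<bar>s n\<bar>^3"
      using elim(1)
        by (intro add_mono norm_Ecen_iexp_sub_Phi_le[OF elim(3)] norm_Phi_sub_power_le[OF elim(3) _ factor]) simp
    also have "\<dots> \<le> (\<bar>s n\<bar> + (s n)^2 * corr_bound) + char_err * (real n * \<bar>s n\<bar>^3)"
      using char_err_nonneg by (simp add: algebra_simps mult_right_mono)
    finally show ?case by (simp add: add.commute)
  qed
  have "(\<lambda>n. char_err * (real n * \<bar>s n\<bar>^3) + (\<bar>s n\<bar> + (s n)^2 * corr_bound))
      \<longlonglongrightarrow> char_err * 0 + (0 + 0^2 * corr_bound)"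
    by (intro tendsto_intros s3 s0 abs0)
  then show "(\<lambda>n. char_err * (real n * \<bar>s n\<bar>^3) + (\<bar>s n\<bar> + (s n)^2 * corr_bound)) \<longlonglongrightarrow> 0"
    by simp
qed

lemma Ecen_iexp_limit:
  "(\<lambda>n. Ecen n (\<lambda>d y. iexp (\<theta> / sqrt (real n) * d))) \<longlonglongrightarrow> complex_of_real (exp (- sigma2 * \<theta>^2 / 2))"
proof -
  have "(\<lambda>n. \<bar>\<theta>\<bar>^3 * (real n / sqrt (real n)^3)) \<longlonglongrightarrow> \<bar>\<theta>\<bar>^3 * 0"
    by (intro tendsto_intros) real_asymp
  then have s3: "(\<lambda>n. real n * \<bar>\<theta> / sqrt (real n)\<bar>^3) \<longlonglongrightarrow> 0"
    by (simp add: abs_divide power_divide mult.commute)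
  have "(\<lambda>n. (Ecen n (\<lambda>d y. iexp (\<theta> / sqrt (real n) * d))
         - complex_of_real (char_factor (\<theta> / sqrt (real n)) ^ (n - 1)) * Phi 1 (\<theta> / sqrt (real n)))
       + complex_of_real (char_factor (\<theta> / sqrt (real n)) ^ (n - 1)) * Phi 1 (\<theta> / sqrt (real n)))
     \<longlonglongrightarrow> 0 + complex_of_real (exp (- sigma2 * \<theta>^2 / 2)) * 1"
    by (intro tendsto_intros Ecen_iexp_approx_limit[OF _ s3] char_factor_power_limit Phi_1_limit) real_asymp
  then show ?thesis by simp
qed

end

section \<open>The central limit theorem for the walk started from 1\<close>

lemma real_distribution_centred_normal:
  "0 < v \<Longrightarrow> real_distribution (density lborel (normal_density 0 (sqrt v)))"
  unfolding real_distribution_def real_distribution_axioms_def using prob_space_normal_density by simp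

lemma char_centred_normal:
  assumes v: "0 < v"
  shows "char (density lborel (normal_density 0 (sqrt v))) \<theta> = complex_of_real (exp (- v * \<theta>^2 / 2))"
proof -
  have "distributed std_normal_distribution lborel (\<lambda>x. x) std_normal_density"
    unfolding distributed_def by (auto simp: distr_id2)
  then have "distributed std_normal_distribution lborel (\<lambda>x. 0 + sqrt v * x)
      (normal_density (0 + sqrt v * 0) (\<bar>sqrt v\<bar> * 1))"
    using v by (intro prob_space.normal_density_affine prob_space_normal_density) auto
  then have "density lborel (normal_density 0 (sqrt v)) = distr std_normal_distribution lborel (\<lambda>x. sqrt v * x)"
    unfolding distributed_def using v by simp
  then have "char (density lborel (normal_density 0 (sqrt v))) \<theta> = char std_normal_distribution (\<theta> * sqrt v)"
    unfolding char_def by (simp add: integral_distr mult.assoc)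
  also have "\<dots> = complex_of_real (exp (- v * \<theta>^2 / 2))"
    using v by (simp add: char_std_normal_distribution power_mult_distrib)
  finally show ?thesis .
qed

lemma isCont_cdf_centred_normal:
  assumes "0 < v"
  shows "isCont (cdf (density lborel (normal_density 0 (sqrt v)))) x"
proof -
  have "AE y in lborel. y \<in> {x} \<longrightarrow> normal_density 0 (sqrt v) y = 0"
    using AE_lborel_singleton[of x] by eventually_elim auto
  then have "emeasure (density lborel (normal_density 0 (sqrt v))) {x} = 0"
    by (subst emeasure_density) (auto intro: nn_integral_0_iff_AE[THEN iffD2])
  then show ?thesis
    using real_distribution.finite_borel_measure_M[OF real_distribution_centred_normal[OF assms]]
    by (simp add: finite_borel_measure.isCont_cdf measure_def)
qed

lemma (in prob_space) cdf_distr_eq_prob: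
  "f \<in> borel_measurable M \<Longrightarrow> cdf (distr M borel f) z = prob {w\<in>space M. f w \<le> z}"
  unfolding cdf_def by (subst measure_distr) (auto simp: vimage_def Int_def conj_commute)

context erw_prob
begin

definition U :: "nat \<Rightarrow> 'a \<Rightarrow> real" where "U n w = (T n w - real n * mean_Y) / sqrt (real n)"

lemma measurable_U[measurable]: "U n \<in> borel_measurable M"
  unfolding U_def by measurable

lemma char_U:
  "char (distr M borel (\<lambda>w. c * U n w)) \<theta> = Ecen n (\<lambda>d y. iexp (c * \<theta> / sqrt (real n) * d))"
proof -
  have "char (distr M borel (\<lambda>w. c * U n w)) \<theta> = integral\<^sup>L M (\<lambda>w. iexp (\<theta> * (c * U n w)))"
    unfolding char_def by (simp add: integral_distr)
  also have "\<dots> = Estate n (centre n (\<lambda>d y. iexp (c * \<theta> / sqrt (real n) * d)))"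
    unfolding Estate_def state_eq centre_def U_def by (simp add: divide_inverse mult_ac)
  finally show ?thesis unfolding Ecen_def .
qed

lemma cdf_U_limit:
  assumes c: "c = 1 \<or> c = -1"
  shows "(\<lambda>n. cdf (distr M borel (\<lambda>w. c * U n w)) z) \<longlonglongrightarrow> cdf (density lborel (normal_density 0 (sqrt sigma2))) z"
proof -
  have "weak_conv_m (\<lambda>n. distr M borel (\<lambda>w. c * U n w)) (density lborel (normal_density 0 (sqrt sigma2)))"
  proof (rule levy_continuity)
    show "real_distribution (distr M borel (\<lambda>w. c * U n w))" for n
      by (intro real_distribution_distr) measurable
    show "real_distribution (density lborel (normal_density 0 (sqrt sigma2)))"
      by (rule real_distribution_centred_normal[OF sigma2_pos])
    have "(c * t)^2 = t^2" for t using c by auto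
    then show "(\<lambda>n. char (distr M borel (\<lambda>w. c * U n w)) t) \<longlonglongrightarrow> char (density lborel (normal_density 0 (sqrt sigma2))) t" for t
      using Ecen_iexp_limit[of "c * t"] unfolding char_U char_centred_normal[OF sigma2_pos] by simp
  qed
  then show ?thesis
    using isCont_cdf_centred_normal[OF sigma2_pos] unfolding weak_conv_m_def weak_conv_def by blast
qed

section \<open>Splitting according to the first step\<close>

lemma prob_state_Estate: "prob {w\<in>space M. P (state n w)} = Estate n (\<lambda>v. if P v then 1 else 0)"
proof -
  have "Estate n (\<lambda>v. if P v then 1 else 0) = integral\<^sup>L M (indicator {w\<in>space M. P (state n w)})"
    unfolding Estate_def by (intro Bochner_Integration.integral_cong refl) (auto simp: indicator_def)
  also have "\<dots> = prob {w\<in>space M. P (state n w)}" by (simp add: Int_absorb2)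
  finally show ?thesis by simp
qed

lemma prob_mult_U_le:
  assumes n: "1 \<le> n"
  shows "prob {w\<in>space M. ternary (X1 w) * U n w \<le> z}
     = p * prob {w\<in>space M. 1 * U n w \<le> z} + q * prob {w\<in>space M. -1 * U n w \<le> z} + r * (if 0 \<le> z then 1 else 0)"
proof -
  define F where "F = (\<lambda>(x, t, y :: real). if x * ((t - real n * mean_Y) / sqrt (real n)) \<le> z then 1 else (0::real))"
  have prob_F: "prob {w\<in>space M. c * U n w \<le> z} = Estate n (with_first c F)" for c
  proof -
    have "prob {w\<in>space M. c * U n w \<le> z}
        = prob {w\<in>space M. (\<lambda>(x, t, y). c * ((t - real n * mean_Y) / sqrt (real n)) \<le> z) (state n w)}"
      by (simp add: state_eq U_def)
    also have "\<dots> = Estate n (with_first c F)"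
      unfolding prob_state_Estate by (intro arg_cong[where f="Estate n"]) (auto simp: fun_eq_iff with_first_def F_def)
    finally show ?thesis .
  qed
  have "prob {w\<in>space M. ternary (X1 w) * U n w \<le> z}
      = prob {w\<in>space M. (\<lambda>(x, t, y). x * ((t - real n * mean_Y) / sqrt (real n)) \<le> z) (state n w)}"
    by (simp add: state_eq U_def)
  also have "\<dots> = Estate n F"
    unfolding prob_state_Estate by (intro arg_cong[where f="Estate n"]) (auto simp: fun_eq_iff F_def)
  also have "\<dots> = p * Estate n (with_first 1 F) + q * Estate n (with_first (-1) F) + r * Estate n (with_first 0 F)"
    using Estate_split_first[OF n, of F] by simp
  also have "Estate n (with_first 0 F) = (if 0 \<le> z then 1 else 0)"
    by (simp add: with_first_def F_def case_prod_beta' Estate_const[OF n])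
  finally show ?thesis unfolding prob_F .
qed

end

declare eX.simps[simp del]

lemma eX_factor: "eX X1 eta K n w = X1 w * eX (\<lambda>_. 1) eta K n w"
proof (induction n rule: less_induct)
  case (less n)
  show ?case by (subst (1 2) eX.simps) (auto simp: less.IH)
qed

lemma eS_factor: "eS X1 eta K n w = X1 w * eS (\<lambda>_. 1) eta K n w"
  unfolding eS_def by (subst eX_factor) (simp add: sum_distrib_left)

context erw_prob
begin

lemma measurable_eX:
  assumes X': "X' \<in> borel_measurable M"
  shows "(\<lambda>w. eX X' eta K n w) \<in> borel_measurable M"
proof (induction n rule: less_induct)
  case (less n)
  consider "n = 1" | "n = 2" | "3 \<le> n" | "n = 0" by linarith
  then show ?case
  proof cases
    case 1 then show ?thesis using X' by (subst eX.simps) simp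
  next
    case 2
    have "(\<lambda>w. eta 2 w * X' w) \<in> borel_measurable M" using X' eta_meas[of 2] by measurable
    then show ?thesis using 2 by (subst eX.simps) simp
  next
    case 3
    have eq: "(\<lambda>w. eX X' eta K n w) = (\<lambda>w. \<Sum>j\<in>{1..<n}. if K n w = j then eta n w * eX X' eta K j w else 0)"
    proof (rule ext)
      fix w
      show "eX X' eta K n w = (\<Sum>j\<in>{1..<n}. if K n w = j then eta n w * eX X' eta K j w else 0)"
        using 3 by (subst eX.simps) (simp add: sum.delta')
    qed
    have "(\<lambda>w. \<Sum>j\<in>{1..<n}. if K n w = j then eta n w * eX X' eta K j w else 0) \<in> borel_measurable M"
    proof (intro borel_measurable_sum measurable_If)
      fix j assume j: "j \<in> {1..<n}"
      show "(\<lambda>w. eta n w * eX X' eta K j w) \<in> borel_measurable M"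
        using less[of j] j eta_meas[of n] 3 by (intro borel_measurable_times) auto
      show "{w \<in> space M. K n w = j} \<in> sets M" using K_sets[of n j] 3 by simp
    qed simp
    then show ?thesis unfolding eq .
  next
    case 4 then show ?thesis by (subst eX.simps) simp
  qed
qed

definition typical :: "'a \<Rightarrow> bool" where
  "typical w \<longleftrightarrow> (\<forall>k. 2 \<le> k \<longrightarrow> eta k w \<in> {1,-1,0}) \<and> (\<forall>k. 3 \<le> k \<longrightarrow> K k w = 1 \<or> K k w = k - 1)
     \<and> X1 w \<in> {1,-1,0}"

lemma AE_typical: "AE w in M. typical w"
proof -
  have a: "AE w in M. \<forall>k. 2 \<le> k \<longrightarrow> eta k w \<in> {1,-1,0}"
  proof (subst AE_all_countable, intro allI)
    fix k show "AE w in M. 2 \<le> k \<longrightarrow> eta k w \<in> {1,-1,0}"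
    proof (cases "2 \<le> k")
      case True then show ?thesis using AE_eta[OF True] by (auto elim: eventually_mono)
    qed simp
  qed
  have b: "AE w in M. \<forall>k. 3 \<le> k \<longrightarrow> K k w = 1 \<or> K k w = k - 1"
  proof (subst AE_all_countable, intro allI)
    fix k show "AE w in M. 3 \<le> k \<longrightarrow> K k w = 1 \<or> K k w = k - 1"
    proof (cases "3 \<le> k")
      case True then show ?thesis using AE_K[OF True] by (auto elim: eventually_mono)
    qed simp
  qed
  show ?thesis using a b AE_X1 unfolding typical_def by eventually_elim auto
qed

lemma eX_typical: assumes g: "typical w" shows "1 \<le> n \<Longrightarrow> eX (\<lambda>_. 1) eta K n w = path_step (sample w) n"
proof (induction n rule: less_induct)
  case (less n)
  consider "n = 1" | "n = 2" | "3 \<le> n" using less.prems by linarith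
  then show ?case
  proof cases
    case 1 then show ?thesis by (subst eX.simps) simp
  next
    case 2
    have "eta 2 w \<in> {1,-1,0}" using g unfolding typical_def by auto
    then show ?thesis using 2 by (subst eX.simps) (simp add: numeral_2_eq_2 sample_Inl ternary_id)
  next
    case 3
    then obtain m where m: "n = Suc m" "2 \<le> m" by (cases n) auto
    have e: "eta n w \<in> {1,-1,0}" using g 3 unfolding typical_def by auto
    have "K n w = 1 \<or> K n w = n - 1" using g 3 unfolding typical_def by blast
    then have k: "K n w = 1 \<or> K n w = m" using m by simp
    then show ?thesis
    proof
      assume k1: "K n w = 1"
      have "eX (\<lambda>_. 1) eta K n w = eta n w * eX (\<lambda>_. 1) eta K 1 w" using 3 k1 by (subst eX.simps) simp
      also have "eX (\<lambda>_. 1) eta K 1 w = 1" by (subst eX.simps) simp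
      finally show ?thesis using m k1 e by (simp add: sample_Inl sample_Inr ternary_id)
    next
      assume km: "K n w = m"
      have "eX (\<lambda>_. 1) eta K n w = eta n w * eX (\<lambda>_. 1) eta K m w" using 3 km m by (subst eX.simps) simp
      also have "eX (\<lambda>_. 1) eta K m w = path_step (sample w) m" using less.IH[of m] m by simp
      finally show ?thesis using m km e by (simp add: sample_Inl sample_Inr ternary_id)
    qed
  qed
qed

lemma eS_typical: "typical w \<Longrightarrow> eS (\<lambda>_. 1) eta K n w = T n w"
  unfolding eS_def T_def path_sum_def by (intro sum.cong refl eX_typical) auto

lemma measurable_eS: "X' \<in> borel_measurable M \<Longrightarrow> eS X' eta K n \<in> borel_measurable M"
  unfolding eS_def[abs_def] by (intro borel_measurable_sum measurable_eX)

lemma variance_eS_eq: "variance (eS (\<lambda>_. 1) eta K n) = variance (T n)"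
proof -
  have m1: "eS (\<lambda>_. 1) eta K n \<in> borel_measurable M" by (rule measurable_eS) simp
  have ae: "AE w in M. eS (\<lambda>_. 1) eta K n w = T n w" using AE_typical by eventually_elim (rule eS_typical)
  have e: "expectation (eS (\<lambda>_. 1) eta K n) = expectation (T n)"
    using m1 measurable_T ae by (rule integral_cong_AE)
  show ?thesis unfolding e using m1 measurable_T ae
    by (intro integral_cong_AE) (measurable, auto elim: eventually_mono)
qed

lemma cdf_walk_eq:
  assumes n: "1 \<le> n"
  shows "cdf (distr M borel (\<lambda>w. (eS X1 eta K n w - real n * ((p - q) * X1 w / (2 + q - p))) / sqrt (real n))) x
     = p * cdf (distr M borel (\<lambda>w. 1 * U n w)) x + q * cdf (distr M borel (\<lambda>w. -1 * U n w)) x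
       + r * (if 0 \<le> x then 1 else 0)"
proof -
  define Z where "Z w = (eS X1 eta K n w - real n * ((p - q) * X1 w / (2 + q - p))) / sqrt (real n)" for w
  have Z_meas[measurable]: "Z \<in> borel_measurable M"
    unfolding Z_def using measurable_eS[OF X1_meas, of n] X1_meas by measurable
  have "AE w in M. Z w = ternary (X1 w) * U n w"
    using AE_typical
  proof eventually_elim
    case (elim w)
    have "ternary (X1 w) = X1 w" using elim unfolding typical_def by (auto intro: ternary_id)
    then show ?case
      unfolding Z_def U_def eS_factor[of X1] eS_typical[OF elim] mean_Y_def
      using denominators_pos by (simp add: field_simps)
  qed
  then have "prob {w\<in>space M. Z w \<le> x} = prob {w\<in>space M. ternary (X1 w) * U n w \<le> x}"
  proof (rule measure_eq_AE[OF eventually_mono])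
    show "{w\<in>space M. ternary (X1 w) * U n w \<le> x} \<in> events" using X1_meas by measurable
  qed auto
  then show ?thesis
    unfolding Z_def[symmetric] using prob_mult_U_le[OF n, of x] by (simp add: cdf_distr_eq_prob)
qed

lemma cdf_walk_limit:
  "(\<lambda>n. cdf (distr M borel (\<lambda>w. (eS X1 eta K n w - real n * ((p - q) * X1 w / (2 + q - p))) / sqrt (real n))) x)
     \<longlonglongrightarrow> (p + q) * normal_cdf_var sigma2 x + r * (if 0 \<le> x then 1 else 0)"
proof -
  have U_limit: "(\<lambda>n. cdf (distr M borel (\<lambda>w. c * U n w)) x) \<longlonglongrightarrow> normal_cdf_var sigma2 x" if "c = 1 \<or> c = -1" for c
    using cdf_U_limit[OF that] sigma2_pos unfolding normal_cdf_var_def by simp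
  have "(\<lambda>n. p * cdf (distr M borel (\<lambda>w. 1 * U n w)) x + q * cdf (distr M borel (\<lambda>w. -1 * U n w)) x
        + r * (if 0 \<le> x then 1 else 0))
      \<longlonglongrightarrow> p * normal_cdf_var sigma2 x + q * normal_cdf_var sigma2 x + r * (if 0 \<le> x then 1 else 0)"
    by (intro tendsto_intros U_limit) simp_all
  moreover have "\<forall>\<^sub>F n in sequentially.
      p * cdf (distr M borel (\<lambda>w. 1 * U n w)) x + q * cdf (distr M borel (\<lambda>w. -1 * U n w)) x
        + r * (if 0 \<le> x then 1 else 0)
      = cdf (distr M borel (\<lambda>w. (eS X1 eta K n w - real n * ((p - q) * X1 w / (2 + q - p))) / sqrt (real n))) x"
    using eventually_ge_at_top[of 1] by eventually_elim (rule cdf_walk_eq[symmetric])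
  ultimately show ?thesis by (simp add: Lim_transform_eventually distrib_right)
qed

end

theorem theorem8p2:
  fixes M :: "'a measure" and p q r :: real
    and X1 :: "'a \<Rightarrow> real" and eta :: "nat \<Rightarrow> 'a \<Rightarrow> real" and K :: "nat \<Rightarrow> 'a \<Rightarrow> nat"
  assumes "prob_space M"
    and "0 < p" "p < 1" "0 < q" "q < 1" "0 < r" "r < 1" "p + q + r = 1"
    and "X1 \<in> borel_measurable M"
    and "\<And>n. 2 \<le> n \<Longrightarrow> eta n \<in> borel_measurable M"
    and "\<And>n. 3 \<le> n \<Longrightarrow> K n \<in> measurable M (count_space UNIV)"
    and "measure M {w \<in> space M. X1 w = 1} = p"
    and "measure M {w \<in> space M. X1 w = -1} = q"
    and "measure M {w \<in> space M. X1 w = 0} = r"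
    and "\<And>n. 2 \<le> n \<Longrightarrow> measure M {w \<in> space M. eta n w = 1} = p"
    and "\<And>n. 2 \<le> n \<Longrightarrow> measure M {w \<in> space M. eta n w = -1} = q"
    and "\<And>n. 2 \<le> n \<Longrightarrow> measure M {w \<in> space M. eta n w = 0} = r"
    and "\<And>n. 3 \<le> n \<Longrightarrow> measure M {w \<in> space M. K n w = 1} = 1/2"
    and "\<And>n. 3 \<le> n \<Longrightarrow> measure M {w \<in> space M. K n w = n - 1} = 1/2"
    and "prob_space.indep_vars M (\<lambda>_. borel)
           (\<lambda>i. case i of Inl n \<Rightarrow> (if n = 1 then X1 else eta n)
                        | Inr n \<Rightarrow> (\<lambda>w. real (K n w)))
           (Inl ` {n. 1 \<le> n} \<union> Inr ` {n. 3 \<le> n})"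
  shows "convergent (\<lambda>n. prob_space.variance M (eS (\<lambda>_. 1) eta K n) / real n)
       \<and> weak_conv
           (\<lambda>n. cdf (distr M borel (\<lambda>w. (eS X1 eta K n w
                   - real n * ((p - q) * X1 w / (2 + q - p))) / sqrt (real n))))
           (\<lambda>x. (p + q) * normal_cdf_var
                   (lim (\<lambda>n. prob_space.variance M (eS (\<lambda>_. 1) eta K n) / real n)) x
                 + r * (if 0 \<le> x then 1 else 0))"
proof -
  interpret erw_prob p q r M X1 eta K
    using assms unfolding erw_prob_def erw_prob_axioms_def erw_params_def by auto
  have variance: "(\<lambda>n. variance (eS (\<lambda>_. 1) eta K n) / real n) \<longlonglongrightarrow> sigma2"
    unfolding variance_eS_eq by (rule variance_T_limit)
  then have "lim (\<lambda>n. variance (eS (\<lambda>_. 1) eta K n) / real n) = sigma2"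
    by (rule limI)
  then show ?thesis
    using variance cdf_walk_limit unfolding weak_conv_def convergent_def by auto
qed

end
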